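(* Let $n\ge 2$ and $M,M'\in M_n(k)$. Then the DG algebras $\mathcal{A}_{\mathcal{O}_{-1}(k^n)}(M)$ and $\mathcal{A}_{\mathcal{O}_{-1}(k^n)}(M')$ are isomorphic (as DG algebras) if and only if there exists $C=(c_{ij})_{n\times n}\in \mathrm{QPL}_n(k)$ such that $M'=C^{-1}M\,(c_{ij}^2)_{n\times n}$.
   Context: $k$ is an algebraically closed field of characteristic zero. A connected cochain DG algebra is a graded $k$-algebra $\mathcal{A}=\bigoplus_{i\ge0}\mathcal{A}^i$ with $\mathcal{A}^0=k$ and a degree $+1$ differential $\partial$ with $\partial^2=0$ satisfying the Leibniz rule $\partial(ab)=\partial(a)b+(-1)^{|a|}a\partial(b)$. $\mathcal{O}_{-1}(k^n)$ is the graded $k$-algebra generated by degree-one elements $x_1,\dots,x_n$ subject to $x_ix_j=-x_jx_i$ for $1\le i<j\le n$. For $M=(m_{ij})\in M_n(k)$, $\mathcal{A}_{\mathcal{O}_{-1}(k^n)}(M)$ denotes the connected cochain DG algebra with underlying graded algebra $\mathcal{O}_{-1}(k^n)$ and differential determined by $\partial(x_i)=\sum_{j=1}^n m_{ij}x_j^2$ and the Leibniz rule. A DG algebra isomorphism is an isomorphism of graded algebras commuting with the differentials. $\mathrm{QPL}_n(k)$ is the set of invertible $n\times n$ matrices over $k$ having exactly one nonzero entry in each row and each column (nonsingular quasi-permutation matrices). For $C=(c_{ij})$, $(c_{ij}^2)_{n\times n}$ is the matrix of entrywise squares. *)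

theory Defs
  imports "Jordan_Normal_Form.Matrix" "HOL-Computational_Algebra.Polynomial"
begin

text \<open>Concrete model of the graded algebra O_{-1}(k^n) with generators x_0,...,x_{n-1}
  (0-based indexing).  An element is a finitely supported coefficient function on
  exponent vectors a :: nat => nat (with a i = 0 for i >= n); the exponent vector a
  stands for the ordered monomial x_0^(a 0) * ... * x_(n-1)^(a (n-1)).\<close>

definition mons :: "nat \<Rightarrow> (nat \<Rightarrow> nat) set" where
  "mons n = {a. \<forall>i\<ge>n. a i = 0}"

definition mdeg :: "nat \<Rightarrow> (nat \<Rightarrow> nat) \<Rightarrow> nat" where
  "mdeg n a = (\<Sum>i<n. a i)"

text \<open>x^a * x^b = msgn n a b * x^(a+b), since x_j x_i = - x_i x_j for i < j.\<close>
definition msgn :: "nat \<Rightarrow> (nat \<Rightarrow> nat) \<Rightarrow> (nat \<Rightarrow> nat) \<Rightarrow> 'k::field" where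
  "msgn n a b = (-1) ^ (\<Sum>i<n. \<Sum>j<i. a i * b j)"

definition supp :: "((nat \<Rightarrow> nat) \<Rightarrow> 'k::field) \<Rightarrow> (nat \<Rightarrow> nat) set" where
  "supp f = {a. f a \<noteq> 0}"

definition OA :: "nat \<Rightarrow> ((nat \<Rightarrow> nat) \<Rightarrow> 'k::field) set" where
  "OA n = {f. finite (supp f) \<and> supp f \<subseteq> mons n}"

definition ozero :: "(nat \<Rightarrow> nat) \<Rightarrow> 'k::field" where
  "ozero = (\<lambda>_. 0)"

definition oone :: "(nat \<Rightarrow> nat) \<Rightarrow> 'k::field" where
  "oone = (\<lambda>a. if a = (\<lambda>_. 0) then 1 else 0)"

definition oadd :: "((nat \<Rightarrow> nat) \<Rightarrow> 'k::field) \<Rightarrow> ((nat \<Rightarrow> nat) \<Rightarrow> 'k) \<Rightarrow> ((nat \<Rightarrow> nat) \<Rightarrow> 'k)" where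
  "oadd f g = (\<lambda>a. f a + g a)"

definition osmult :: "'k::field \<Rightarrow> ((nat \<Rightarrow> nat) \<Rightarrow> 'k) \<Rightarrow> ((nat \<Rightarrow> nat) \<Rightarrow> 'k)" where
  "osmult c f = (\<lambda>a. c * f a)"

definition omul :: "nat \<Rightarrow> ((nat \<Rightarrow> nat) \<Rightarrow> 'k::field) \<Rightarrow> ((nat \<Rightarrow> nat) \<Rightarrow> 'k) \<Rightarrow> ((nat \<Rightarrow> nat) \<Rightarrow> 'k)" where
  "omul n f g = (\<lambda>c. \<Sum>a\<in>supp f. \<Sum>b\<in>supp g.
      if (\<lambda>i. a i + b i) = c then msgn n a b * f a * g b else 0)"

definition xgen :: "nat \<Rightarrow> (nat \<Rightarrow> nat) \<Rightarrow> 'k::field" where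
  "xgen i = (\<lambda>a. if a = (\<lambda>j. if j = i then 1 else 0) then 1 else 0)"

definition ohomog :: "nat \<Rightarrow> nat \<Rightarrow> ((nat \<Rightarrow> nat) \<Rightarrow> 'k::field) \<Rightarrow> bool" where
  "ohomog n d f = (\<forall>a\<in>supp f. mdeg n a = d)"

definition graded_alg_iso :: "nat \<Rightarrow> (((nat \<Rightarrow> nat) \<Rightarrow> 'k::field) \<Rightarrow> ((nat \<Rightarrow> nat) \<Rightarrow> 'k)) \<Rightarrow> bool" where
  "graded_alg_iso n \<phi> =
     (bij_betw \<phi> (OA n) (OA n)
      \<and> (\<forall>f\<in>OA n. \<forall>g\<in>OA n. \<phi> (oadd f g) = oadd (\<phi> f) (\<phi> g))
      \<and> (\<forall>c. \<forall>f\<in>OA n. \<phi> (osmult c f) = osmult c (\<phi> f))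
      \<and> (\<forall>f\<in>OA n. \<forall>g\<in>OA n. \<phi> (omul n f g) = omul n (\<phi> f) (\<phi> g))
      \<and> \<phi> oone = oone
      \<and> (\<forall>d. \<forall>f\<in>OA n. ohomog n d f \<longrightarrow> ohomog n d (\<phi> f)))"

text \<open>d is the differential of A_{O_{-1}(k^n)}(M): the k-linear map with
  d(x_i) = sum_j m_ij x_j^2 satisfying the graded Leibniz rule
  (extended by zero outside the carrier, so that it is unique).\<close>
definition is_diff :: "nat \<Rightarrow> 'k::field mat \<Rightarrow> (((nat \<Rightarrow> nat) \<Rightarrow> 'k) \<Rightarrow> ((nat \<Rightarrow> nat) \<Rightarrow> 'k)) \<Rightarrow> bool" where
  "is_diff n M d =
     ((\<forall>f\<in>OA n. d f \<in> OA n)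
      \<and> (\<forall>f. f \<notin> OA n \<longrightarrow> d f = ozero)
      \<and> (\<forall>f\<in>OA n. \<forall>g\<in>OA n. d (oadd f g) = oadd (d f) (d g))
      \<and> (\<forall>c. \<forall>f\<in>OA n. d (osmult c f) = osmult c (d f))
      \<and> (\<forall>i<n. d (xgen i) = (\<lambda>a. \<Sum>j<n. M $$ (i, j) * omul n (xgen j) (xgen j) a))
      \<and> (\<forall>p. \<forall>f\<in>OA n. \<forall>g\<in>OA n. ohomog n p f \<longrightarrow>
            d (omul n f g) = oadd (omul n (d f) g) (osmult ((-1) ^ p) (omul n f (d g)))))"

definition dga_diff :: "nat \<Rightarrow> 'k::field mat \<Rightarrow> ((nat \<Rightarrow> nat) \<Rightarrow> 'k) \<Rightarrow> ((nat \<Rightarrow> nat) \<Rightarrow> 'k)" where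
  "dga_diff n M = (THE d. is_diff n M d)"

definition dga_isomorphic :: "nat \<Rightarrow> 'k::field mat \<Rightarrow> 'k mat \<Rightarrow> bool" where
  "dga_isomorphic n M M' =
     (\<exists>\<phi>. graded_alg_iso n \<phi> \<and> (\<forall>f\<in>OA n. \<phi> (dga_diff n M f) = dga_diff n M' (\<phi> f)))"

definition QPL :: "nat \<Rightarrow> 'k::field mat set" where
  "QPL n = {C. C \<in> carrier_mat n n \<and> invertible_mat C
     \<and> (\<forall>i<n. \<exists>!j. j < n \<and> C $$ (i, j) \<noteq> 0)
     \<and> (\<forall>j<n. \<exists>!i. i < n \<and> C $$ (i, j) \<noteq> 0)}"

definition alg_closed_type :: "'k::field itself \<Rightarrow> bool" where
  "alg_closed_type _ = (\<forall>p :: 'k poly. degree p > 0 \<longrightarrow> (\<exists>x. poly p x = 0))"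

end

theory Submission
  imports Defs "HOL-Combinatorics.Permutations" "Jordan_Normal_Form.Determinant"
begin

text \<open>A graded automorphism \<phi> of O_{-1}(k^n) is determined by the matrix C with
  \<phi>(x_i) = \<Sum>_j C_ij x_j. Since x_i x_j + x_j x_i = 0 for i \<noteq> j while x_m^2 \<noteq> 0, the images
  of two distinct generators have disjoint supports, and injectivity makes every row of C
  non-zero, so C is a quasi-permutation matrix. Conversely, x_i \<mapsto> c_i x_(s i) extends to an
  automorphism for every permutation s and all non-zero scalars c_i.
  As (\<Sum>_j c_j x_j)^2 = \<Sum>_j c_j^2 x_j^2, such an automorphism commutes with the differentials
  on the generators exactly when M (c_ij^2) = C M'; commuting on the generators suffices,
  since the Leibniz rule propagates it to all monomials. The differential is defined as the
  unique derivation with the prescribed values on the generators, so its existence has to be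
  shown by an explicit construction.\<close>

section \<open>Monomials and the product of the algebra\<close>

abbreviation exp_add :: "(nat \<Rightarrow> nat) \<Rightarrow> (nat \<Rightarrow> nat) \<Rightarrow> nat \<Rightarrow> nat" where
  "exp_add a b \<equiv> (\<lambda>i. a i + b i)"

definition unit_exp :: "nat \<Rightarrow> nat \<Rightarrow> nat" where
  "unit_exp i = (\<lambda>j. if j = i then 1 else 0)"

definition sq_exp :: "nat \<Rightarrow> nat \<Rightarrow> nat" where
  "sq_exp i = (\<lambda>j. if j = i then 2 else 0)"

definition omon :: "(nat \<Rightarrow> nat) \<Rightarrow> (nat \<Rightarrow> nat) \<Rightarrow> 'k::field" where
  "omon a = (\<lambda>c. if c = a then 1 else 0)"

lemma xgen_eq_omon: "xgen i = omon (unit_exp i)"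
  by (simp add: xgen_def omon_def unit_exp_def)

lemma oone_eq_omon: "oone = omon (\<lambda>_. 0)"
  by (simp add: oone_def omon_def)

lemma supp_omon [simp]: "supp (omon a) = {a}"
  by (auto simp: supp_def omon_def)

lemma zero_in_mons: "(\<lambda>_. 0) \<in> mons n"
  by (simp add: mons_def)

lemma unit_exp_in_mons: "i < n \<Longrightarrow> unit_exp i \<in> mons n"
  by (simp add: mons_def unit_exp_def)

lemma exp_add_in_mons: "a \<in> mons n \<Longrightarrow> b \<in> mons n \<Longrightarrow> exp_add a b \<in> mons n"
  by (simp add: mons_def)

lemma mdeg_unit_exp: "i < n \<Longrightarrow> mdeg n (unit_exp i) = 1"
  by (simp add: mdeg_def unit_exp_def)

lemma mdeg_exp_add: "mdeg n (exp_add a b) = mdeg n a + mdeg n b"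
  by (simp add: mdeg_def sum.distrib)

lemma unit_exp_eq_iff: "unit_exp i = unit_exp j \<longleftrightarrow> i = j"
proof
  assume "unit_exp i = unit_exp j"
  then have "unit_exp i i = unit_exp j i" by simp
  then show "i = j" by (simp add: unit_exp_def split: if_splits)
qed simp

lemma sq_exp_eq_iff: "sq_exp i = sq_exp j \<longleftrightarrow> i = j"
proof
  assume "sq_exp i = sq_exp j"
  then have "sq_exp i i = sq_exp j i" by simp
  then show "i = j" by (simp add: sq_exp_def split: if_splits)
qed simp

lemma exp_add_unit_exp_self: "exp_add (unit_exp i) (unit_exp i) = sq_exp i"
  by (auto simp: unit_exp_def sq_exp_def)

lemma omon_in_OA: "a \<in> mons n \<Longrightarrow> omon a \<in> OA n"
  by (simp add: OA_def)

lemma xgen_in_OA: "i < n \<Longrightarrow> xgen i \<in> OA n"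
  by (simp add: xgen_eq_omon omon_in_OA unit_exp_in_mons)

lemma ozero_in_OA: "ozero \<in> OA n"
  by (simp add: OA_def supp_def ozero_def)

lemma oone_in_OA: "oone \<in> OA n"
  by (simp add: oone_eq_omon omon_in_OA zero_in_mons)

lemma oadd_in_OA: "f \<in> OA n \<Longrightarrow> g \<in> OA n \<Longrightarrow> oadd f g \<in> OA n"
proof -
  assume "f \<in> OA n" "g \<in> OA n"
  moreover have "supp (oadd f g) \<subseteq> supp f \<union> supp g"
    by (auto simp: supp_def oadd_def)
  ultimately show ?thesis
    unfolding OA_def by (auto intro: finite_subset)
qed

lemma osmult_in_OA: "f \<in> OA n \<Longrightarrow> osmult c f \<in> OA n"
proof -
  assume "f \<in> OA n"
  moreover have "supp (osmult c f) \<subseteq> supp f"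
    by (auto simp: supp_def osmult_def)
  ultimately show ?thesis
    unfolding OA_def by (auto intro: finite_subset)
qed

lemma supp_sum_subset: "supp (\<lambda>c. \<Sum>j\<in>J. F j c) \<subseteq> (\<Union>j\<in>J. supp (F j))"
  by (auto simp: supp_def intro: sum.neutral)

lemma sum_in_OA:
  assumes "finite J" and "\<And>j. j \<in> J \<Longrightarrow> F j \<in> OA n"
  shows "(\<lambda>c. \<Sum>j\<in>J. F j c) \<in> OA n"
  using supp_sum_subset[of F J] assms unfolding OA_def by (auto intro: finite_subset)

lemma omon_expansion: "f \<in> OA n \<Longrightarrow> (\<lambda>c. \<Sum>a\<in>supp f. f a * omon a c) = f"
  by (auto simp: OA_def omon_def supp_def if_distrib[of "\<lambda>x. _ * x"] cong: if_cong)

lemma omul_eq_sum_superset: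
  assumes "finite A" "finite B" "supp f \<subseteq> A" "supp g \<subseteq> B"
  shows "omul n f g c = (\<Sum>a\<in>A. \<Sum>b\<in>B. f a * g b * (if exp_add a b = c then msgn n a b else 0))"
proof -
  have "omul n f g c = (\<Sum>a\<in>supp f. \<Sum>b\<in>B. if exp_add a b = c then msgn n a b * f a * g b else 0)"
    unfolding omul_def
    by (rule sum.cong[OF refl], rule sum.mono_neutral_left) (use assms in \<open>auto simp: supp_def\<close>)
  also have "\<dots> = (\<Sum>a\<in>A. \<Sum>b\<in>B. if exp_add a b = c then msgn n a b * f a * g b else 0)"
    by (rule sum.mono_neutral_left)
      (use assms in \<open>auto simp: supp_def intro!: sum.neutral split: if_splits\<close>)
  also have "\<dots> = (\<Sum>a\<in>A. \<Sum>b\<in>B. f a * g b * (if exp_add a b = c then msgn n a b else 0))"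
    by (intro sum.cong refl) simp
  finally show ?thesis .
qed

lemma supp_omul_subset: "supp (omul n f g) \<subseteq> (\<lambda>(a, b). exp_add a b) ` (supp f \<times> supp g)"
proof
  fix c assume "c \<in> supp (omul n f g)"
  then have "(\<Sum>a\<in>supp f. \<Sum>b\<in>supp g. if exp_add a b = c then msgn n a b * f a * g b else 0) \<noteq> 0"
    by (simp add: supp_def omul_def)
  then obtain a where a: "a \<in> supp f"
    and "(\<Sum>b\<in>supp g. if exp_add a b = c then msgn n a b * f a * g b else 0) \<noteq> 0"
    using sum.not_neutral_contains_not_neutral by blast
  then obtain b where "b \<in> supp g" "(if exp_add a b = c then msgn n a b * f a * g b else 0) \<noteq> 0"
    using sum.not_neutral_contains_not_neutral by blast
  with a show "c \<in> (\<lambda>(a, b). exp_add a b) ` (supp f \<times> supp g)"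
    by (force split: if_splits)
qed

lemma omul_in_OA:
  assumes "f \<in> OA n" "g \<in> OA n"
  shows "omul n f g \<in> OA n"
proof -
  let ?S = "(\<lambda>(a, b). exp_add a b) ` (supp f \<times> supp g)"
  have "finite ?S" "?S \<subseteq> mons n"
    using assms by (auto simp: OA_def intro: exp_add_in_mons)
  then show ?thesis
    using supp_omul_subset[of n f g] unfolding OA_def by (auto intro: finite_subset)
qed

lemma omul_omon_omon: "omul n (omon a) (omon b) = osmult (msgn n a b) (omon (exp_add a b))"
  unfolding omul_def supp_omon by (rule ext) (auto simp: osmult_def omon_def)

lemma msgn_eq_sum_pairs: "msgn n a b = (-1) ^ (\<Sum>p<n. \<Sum>q<n. if q < p then a p * b q else 0)"
proof -
  have "(\<Sum>q<p. a p * b q) = (\<Sum>q<n. if q < p then a p * b q else 0)" if "p < n" for p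
  proof -
    have "(\<Sum>q<n. if q < p then a p * b q else 0) = (\<Sum>q\<in>{..<n} \<inter> {q. q < p}. a p * b q)"
      by (simp add: sum.inter_restrict)
    also have "{..<n} \<inter> {q. q < p} = {..<p}" using that by auto
    finally show ?thesis by simp
  qed
  note pairs = this
  have "(\<Sum>p<n. \<Sum>q<p. a p * b q) = (\<Sum>p<n. \<Sum>q<n. if q < p then a p * b q else 0)"
    by (rule sum.cong) (simp_all add: pairs)
  then show ?thesis unfolding msgn_def by simp
qed

lemma msgn_unit_exp: "msgn n (unit_exp i) (unit_exp j) = (if j < i \<and> i < n then -1 else 1)"
proof -
  have "(\<Sum>q<p. unit_exp i p * unit_exp j q) = (if p = i then (if j < i then 1 else 0) else 0)" for p
    by (cases "p = i") (simp_all add: unit_exp_def)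
  then have "(\<Sum>p<n. \<Sum>q<p. unit_exp i p * unit_exp j q) = (if j < i \<and> i < n then 1 else 0)"
    by simp
  then show ?thesis by (simp add: msgn_def)
qed

lemma omul_xgen_self: "omul n (xgen i) (xgen i) = omon (sq_exp i)"
  by (simp add: xgen_eq_omon omul_omon_omon msgn_unit_exp exp_add_unit_exp_self osmult_def)

lemma xgen_anticommute:
  assumes "i \<noteq> j" "i < n" "j < n"
  shows "oadd (omul n (xgen i) (xgen j)) (omul n (xgen j) (xgen i)) = ozero"
proof -
  have swap: "exp_add (unit_exp j) (unit_exp i) = exp_add (unit_exp i) (unit_exp j)" by auto
  have "msgn n (unit_exp i) (unit_exp j) + msgn n (unit_exp j) (unit_exp i) = (0::'a)"
    using assms by (auto simp: msgn_unit_exp)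
  then show ?thesis
    unfolding xgen_eq_omon omul_omon_omon swap
    by (simp add: oadd_def osmult_def ozero_def fun_eq_iff flip: distrib_right)
qed


section \<open>Linear maps and linear extension from monomials\<close>

definition olinear :: "nat \<Rightarrow> (((nat \<Rightarrow> nat) \<Rightarrow> 'k::field) \<Rightarrow> (nat \<Rightarrow> nat) \<Rightarrow> 'k) \<Rightarrow> bool" where
  "olinear n L \<longleftrightarrow> (\<forall>f\<in>OA n. \<forall>g\<in>OA n. L (oadd f g) = oadd (L f) (L g))
      \<and> (\<forall>c. \<forall>f\<in>OA n. L (osmult c f) = osmult c (L f))"

definition obilinear :: "nat \<Rightarrow> (((nat \<Rightarrow> nat) \<Rightarrow> 'k::field) \<Rightarrow> ((nat \<Rightarrow> nat) \<Rightarrow> 'k) \<Rightarrow> (nat \<Rightarrow> nat) \<Rightarrow> 'k) \<Rightarrow> bool" where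
  "obilinear n B \<longleftrightarrow> (\<forall>g\<in>OA n. olinear n (\<lambda>f. B f g)) \<and> (\<forall>f\<in>OA n. olinear n (B f))"

lemma olinear_id: "olinear n (\<lambda>f. f)"
  by (simp add: olinear_def)

lemma olinear_comp:
  assumes "olinear n L" "olinear n K" "\<And>f. f \<in> OA n \<Longrightarrow> K f \<in> OA n"
  shows "olinear n (\<lambda>f. L (K f))"
  using assms osmult_in_OA unfolding olinear_def by (simp add: Ball_def)

lemma olinear_ozero:
  assumes "olinear n L"
  shows "L ozero = ozero"
proof -
  have "L ozero = L (osmult 0 ozero)"
    by (simp add: osmult_def ozero_def)
  also have "\<dots> = osmult 0 (L ozero)"
    using assms ozero_in_OA unfolding olinear_def by blast
  also have "\<dots> = ozero"
    by (simp add: osmult_def ozero_def)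
  finally show ?thesis .
qed

lemma olinear_sum:
  assumes L: "olinear n L" and J: "finite J" and F: "\<And>j. j \<in> J \<Longrightarrow> F j \<in> OA n"
  shows "L (\<lambda>c. \<Sum>j\<in>J. F j c) = (\<lambda>c. \<Sum>j\<in>J. L (F j) c)"
  using J F
proof (induction J rule: finite_induct)
  case empty
  then show ?case using olinear_ozero[OF L] by (simp add: ozero_def)
next
  case (insert j J)
  have S: "(\<lambda>c. \<Sum>j\<in>J. F j c) \<in> OA n"
    using insert by (intro sum_in_OA) auto
  have "L (\<lambda>c. \<Sum>j\<in>insert j J. F j c) = L (oadd (F j) (\<lambda>c. \<Sum>j\<in>J. F j c))"
    using insert(1,2) by (simp add: oadd_def)
  also have "\<dots> = oadd (L (F j)) (L (\<lambda>c. \<Sum>j\<in>J. F j c))"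
    using L S insert.prems unfolding olinear_def by simp
  also have "\<dots> = (\<lambda>c. \<Sum>j\<in>insert j J. L (F j) c)"
    using insert by (simp add: oadd_def)
  finally show ?case .
qed

lemma olinear_eq_on_omon:
  fixes f :: "(nat \<Rightarrow> nat) \<Rightarrow> 'k::field"
  assumes "olinear n L" "olinear n K" "f \<in> OA n"
    and "\<And>a. a \<in> supp f \<Longrightarrow> L (omon a) = K (omon a)"
  shows "L f = K f"
proof -
  have omon: "\<And>a. a \<in> supp f \<Longrightarrow> (omon a :: (nat \<Rightarrow> nat) \<Rightarrow> 'k) \<in> OA n"
    using assms(3) by (auto simp: OA_def intro: omon_in_OA)
  have fin: "finite (supp f)" using assms(3) by (simp add: OA_def)
  have expand: "L' f = (\<lambda>c. \<Sum>a\<in>supp f. f a * L' (omon a) c)" if L': "olinear n L'"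
    for L' :: "((nat \<Rightarrow> nat) \<Rightarrow> 'k) \<Rightarrow> (nat \<Rightarrow> nat) \<Rightarrow> 'k"
  proof -
    have "L' f = L' (\<lambda>c. \<Sum>a\<in>supp f. osmult (f a) (omon a) c)"
      by (simp add: osmult_def omon_expansion[OF assms(3)])
    also have "\<dots> = (\<lambda>c. \<Sum>a\<in>supp f. L' (osmult (f a) (omon a)) c)"
      using omon by (intro olinear_sum[OF L' fin] osmult_in_OA)
    also have "\<dots> = (\<lambda>c. \<Sum>a\<in>supp f. osmult (f a) (L' (omon a)) c)"
    proof (intro ext sum.cong refl)
      fix a c assume "a \<in> supp f"
      then have "L' (osmult (f a) (omon a)) = osmult (f a) (L' (omon a))"
        using L' omon unfolding olinear_def by blast
      then show "L' (osmult (f a) (omon a)) c = osmult (f a) (L' (omon a)) c"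
        by simp
    qed
    also have "\<dots> = (\<lambda>c. \<Sum>a\<in>supp f. f a * L' (omon a) c)"
      by (simp add: osmult_def)
    finally show ?thesis .
  qed
  show ?thesis using expand[OF assms(1)] expand[OF assms(2)] assms(4) by simp
qed

lemma obilinear_eq_on_omon:
  fixes f g :: "(nat \<Rightarrow> nat) \<Rightarrow> 'k::field"
  assumes B: "obilinear n B" and C: "obilinear n C" and f: "f \<in> OA n" and g: "g \<in> OA n"
    and eq: "\<And>a b. a \<in> supp f \<Longrightarrow> b \<in> supp g \<Longrightarrow> B (omon a) (omon b) = C (omon a) (omon b)"
  shows "B f g = C f g"
proof (rule olinear_eq_on_omon[where L = "\<lambda>f. B f g" and K = "\<lambda>f. C f g", OF _ _ f])
  fix a assume a: "a \<in> supp f"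
  then have om: "(omon a :: (nat \<Rightarrow> nat) \<Rightarrow> 'k) \<in> OA n"
    using f by (auto simp: OA_def intro: omon_in_OA)
  show "B (omon a) g = C (omon a) g"
  proof (rule olinear_eq_on_omon[OF _ _ g, rotated -1])
    show "B (omon a) (omon b) = C (omon a) (omon b)" if "b \<in> supp g" for b
      using eq[OF a that] .
  qed (use B C om in \<open>simp_all add: obilinear_def Ball_def\<close>)
qed (use B C g in \<open>simp_all add: obilinear_def Ball_def\<close>)

lemma obilinear_omul: "obilinear n (omul n :: ((nat \<Rightarrow> nat) \<Rightarrow> 'k::field) \<Rightarrow> _)"
proof -
  have add_left: "omul n (oadd f1 f2) g = oadd (omul n f1 g) (omul n f2 g)"
    and add_right: "omul n g (oadd f1 f2) = oadd (omul n g f1) (omul n g f2)"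
    if "f1 \<in> OA n" "f2 \<in> OA n" "g \<in> OA n" for f1 f2 g :: "(nat \<Rightarrow> nat) \<Rightarrow> 'k"
  proof -
    let ?A = "supp f1 \<union> supp f2"
    have A: "finite ?A" "finite (supp g)" "supp f1 \<subseteq> ?A" "supp f2 \<subseteq> ?A" "supp (oadd f1 f2) \<subseteq> ?A"
      using that by (auto simp: OA_def supp_def oadd_def)
    show "omul n (oadd f1 f2) g = oadd (omul n f1 g) (omul n f2 g)"
      using A by (simp add: fun_eq_iff oadd_def omul_eq_sum_superset[of ?A "supp g"] algebra_simps
          sum.distrib)
    show "omul n g (oadd f1 f2) = oadd (omul n g f1) (omul n g f2)"
      using A by (simp add: fun_eq_iff oadd_def omul_eq_sum_superset[of "supp g" ?A] algebra_simps
          sum.distrib)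
  qed
  have smult_left: "omul n (osmult k f) g = osmult k (omul n f g)"
    and smult_right: "omul n g (osmult k f) = osmult k (omul n g f)"
    if "f \<in> OA n" "g \<in> OA n" for k and f g :: "(nat \<Rightarrow> nat) \<Rightarrow> 'k"
  proof -
    have A: "finite (supp f)" "finite (supp g)" "supp (osmult k f) \<subseteq> supp f"
      using that by (auto simp: OA_def supp_def osmult_def)
    show "omul n (osmult k f) g = osmult k (omul n f g)"
      using A by (simp add: fun_eq_iff osmult_def omul_eq_sum_superset[of "supp f" "supp g"]
          sum_distrib_left mult_ac)
    show "omul n g (osmult k f) = osmult k (omul n g f)"
      using A by (simp add: fun_eq_iff osmult_def omul_eq_sum_superset[of "supp g" "supp f"]
          sum_distrib_left mult_ac)
  qed
  show ?thesis
    unfolding obilinear_def olinear_def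
    using add_left add_right smult_left smult_right by simp
qed

lemma omul_oone_left:
  assumes "f \<in> OA n"
  shows "omul n oone f = f"
proof (rule olinear_eq_on_omon[OF _ olinear_id assms])
  show "olinear n (omul n oone)"
    using obilinear_omul[of n] oone_in_OA[of n] unfolding obilinear_def by blast
  show "omul n oone (omon a) = omon a" for a
    by (simp add: oone_eq_omon omul_omon_omon msgn_def osmult_def)
qed

lemma omul_oone_right:
  assumes "f \<in> OA n"
  shows "omul n f oone = f"
proof (rule olinear_eq_on_omon[OF _ olinear_id assms])
  show "olinear n (\<lambda>f. omul n f oone)"
    using obilinear_omul[of n] oone_in_OA[of n] unfolding obilinear_def by blast
  show "omul n (omon a) oone = omon a" for a
    by (simp add: oone_eq_omon omul_omon_omon msgn_def osmult_def)
qed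

lemma omul_osmult:
  assumes "f \<in> OA n" "g \<in> OA n"
  shows "omul n (osmult k f) g = osmult k (omul n f g)" "omul n f (osmult k g) = osmult k (omul n f g)"
  using obilinear_omul[of n] assms unfolding obilinear_def olinear_def by blast+

definition linext :: "nat \<Rightarrow> ((nat \<Rightarrow> nat) \<Rightarrow> (nat \<Rightarrow> nat) \<Rightarrow> 'k::field)
    \<Rightarrow> ((nat \<Rightarrow> nat) \<Rightarrow> 'k) \<Rightarrow> (nat \<Rightarrow> nat) \<Rightarrow> 'k" where
  "linext n F f = (if f \<in> OA n then (\<lambda>c. \<Sum>a\<in>supp f. f a * F a c) else ozero)"

lemma linext_eq_sum_superset:
  assumes "f \<in> OA n" "finite A" "supp f \<subseteq> A"
  shows "linext n F f = (\<lambda>c. \<Sum>a\<in>A. f a * F a c)"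
  using assms unfolding linext_def by (auto intro!: sum.mono_neutral_left simp: supp_def)

lemma linext_omon: "a \<in> mons n \<Longrightarrow> linext n F (omon a) = F a"
  by (simp add: linext_def omon_in_OA) (simp add: omon_def)

lemma linext_in_OA:
  assumes "\<And>a. a \<in> mons n \<Longrightarrow> F a \<in> OA n"
  shows "linext n F f \<in> OA n"
proof (cases "f \<in> OA n")
  case True
  then have "supp f \<subseteq> mons n" "finite (supp f)" by (auto simp: OA_def)
  then have "(\<lambda>c. \<Sum>a\<in>supp f. osmult (f a) (F a) c) \<in> OA n"
    using assms by (intro sum_in_OA osmult_in_OA) auto
  then show ?thesis using True by (simp add: linext_def osmult_def)
qed (simp add: linext_def ozero_in_OA)

lemma olinear_linext:
  fixes F :: "(nat \<Rightarrow> nat) \<Rightarrow> (nat \<Rightarrow> nat) \<Rightarrow> 'k::field"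
  shows "olinear n (linext n F)"
  unfolding olinear_def
proof (intro conjI ballI allI)
  fix f g :: "(nat \<Rightarrow> nat) \<Rightarrow> 'k" assume f: "f \<in> OA n" and g: "g \<in> OA n"
  let ?A = "supp f \<union> supp g"
  have A: "finite ?A" using f g by (simp add: OA_def)
  have "supp (oadd f g) \<subseteq> ?A" by (auto simp: supp_def oadd_def)
  then show "linext n F (oadd f g) = oadd (linext n F f) (linext n F g)"
    using linext_eq_sum_superset[OF oadd_in_OA[OF f g] A] linext_eq_sum_superset[OF f A]
      linext_eq_sum_superset[OF g A]
    by (simp add: oadd_def distrib_right sum.distrib)
next
  fix c and f :: "(nat \<Rightarrow> nat) \<Rightarrow> 'k" assume f: "f \<in> OA n"
  have A: "finite (supp f)" using f by (simp add: OA_def)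
  have "supp (osmult c f) \<subseteq> supp f" by (auto simp: supp_def osmult_def)
  then show "linext n F (osmult c f) = osmult c (linext n F f)"
    using linext_eq_sum_superset[OF osmult_in_OA[OF f] A] linext_eq_sum_superset[OF f A order.refl]
    by (simp add: osmult_def sum_distrib_left mult.assoc)
qed

lemma ohomog_linext:
  assumes "\<And>a. a \<in> mons n \<Longrightarrow> ohomog n (mdeg n a) (F a)" and "ohomog n d f"
  shows "ohomog n d (linext n F f)"
proof (cases "f \<in> OA n")
  case True
  have "supp (linext n F f) \<subseteq> (\<Union>a\<in>supp f. supp (F a))"
    using True supp_sum_subset[of "\<lambda>a c. f a * F a c" "supp f"]
    by (auto simp: linext_def supp_def)
  then show ?thesis
    using assms True unfolding ohomog_def OA_def by fastforce
qed (simp add: linext_def ohomog_def supp_def ozero_def)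

lemma olinear_lincomb:
  assumes L: "olinear n L" and I: "finite I" and F: "\<And>i. i \<in> I \<Longrightarrow> F i \<in> OA n"
  shows "L (\<lambda>a. \<Sum>i\<in>I. osmult (u i) (F i) a) = (\<lambda>a. \<Sum>i\<in>I. u i * L (F i) a)"
proof -
  have "L (\<lambda>a. \<Sum>i\<in>I. osmult (u i) (F i) a) = (\<lambda>a. \<Sum>i\<in>I. L (osmult (u i) (F i)) a)"
    using F by (intro olinear_sum[OF L I] osmult_in_OA)
  also have "\<dots> = (\<lambda>a. \<Sum>i\<in>I. u i * L (F i) a)"
  proof (intro ext sum.cong refl)
    fix a i assume "i \<in> I"
    then have "L (osmult (u i) (F i)) = osmult (u i) (L (F i))"
      using L F unfolding olinear_def by blast
    then show "L (osmult (u i) (F i)) a = u i * L (F i) a" by (simp add: osmult_def)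
  qed
  finally show ?thesis .
qed

lemma obilinear_lincomb_expand:
  assumes B: "obilinear n B" and fin: "finite I" "finite J"
    and F: "\<And>i. i \<in> I \<Longrightarrow> F i \<in> OA n" and G: "\<And>j. j \<in> J \<Longrightarrow> G j \<in> OA n"
  shows "B (\<lambda>a. \<Sum>i\<in>I. osmult (u i) (F i) a) (\<lambda>a. \<Sum>j\<in>J. osmult (v j) (G j) a)
    = (\<lambda>a. \<Sum>i\<in>I. \<Sum>j\<in>J. u i * v j * B (F i) (G j) a)"
proof -
  let ?G = "\<lambda>a. \<Sum>j\<in>J. osmult (v j) (G j) a"
  have "?G \<in> OA n" using fin G by (intro sum_in_OA osmult_in_OA) auto
  then have "B (\<lambda>a. \<Sum>i\<in>I. osmult (u i) (F i) a) ?G = (\<lambda>a. \<Sum>i\<in>I. u i * B (F i) ?G a)"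
    using B F unfolding obilinear_def by (intro olinear_lincomb[OF _ fin(1)]) auto
  also have "\<dots> = (\<lambda>a. \<Sum>i\<in>I. u i * (\<Sum>j\<in>J. v j * B (F i) (G j) a))"
  proof (intro ext sum.cong refl)
    fix a i assume "i \<in> I"
    then have "B (F i) ?G = (\<lambda>a. \<Sum>j\<in>J. v j * B (F i) (G j) a)"
      using B F G unfolding obilinear_def by (intro olinear_lincomb[OF _ fin(2)]) auto
    then show "u i * B (F i) ?G a = u i * (\<Sum>j\<in>J. v j * B (F i) (G j) a)" by simp
  qed
  finally show ?thesis by (simp add: sum_distrib_left mult.assoc)
qed

lemma olinear_double_sum:
  assumes L: "olinear n L" and fin: "finite I" "finite J"
    and F: "\<And>i j. i \<in> I \<Longrightarrow> j \<in> J \<Longrightarrow> F i j \<in> OA n"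
  shows "L (\<lambda>c. \<Sum>i\<in>I. \<Sum>j\<in>J. osmult (k i j) (F i j) c)
    = (\<lambda>c. \<Sum>i\<in>I. \<Sum>j\<in>J. k i j * L (F i j) c)"
proof -
  have inner: "(\<lambda>c. \<Sum>j\<in>J. osmult (k i j) (F i j) c) \<in> OA n" if "i \<in> I" for i
    using fin F that by (intro sum_in_OA osmult_in_OA) auto
  have "L (\<lambda>c. \<Sum>i\<in>I. \<Sum>j\<in>J. osmult (k i j) (F i j) c)
      = (\<lambda>c. \<Sum>i\<in>I. L (\<lambda>c. \<Sum>j\<in>J. osmult (k i j) (F i j) c) c)"
    by (rule olinear_sum[OF L fin(1) inner])
  also have "\<dots> = (\<lambda>c. \<Sum>i\<in>I. \<Sum>j\<in>J. L (osmult (k i j) (F i j)) c)"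
  proof (intro ext sum.cong refl)
    fix c i assume i: "i \<in> I"
    have "L (\<lambda>c. \<Sum>j\<in>J. osmult (k i j) (F i j) c) = (\<lambda>c. \<Sum>j\<in>J. L (osmult (k i j) (F i j)) c)"
      by (rule olinear_sum[OF L fin(2)]) (use F i in \<open>auto intro: osmult_in_OA\<close>)
    then show "L (\<lambda>c. \<Sum>j\<in>J. osmult (k i j) (F i j) c) c = (\<Sum>j\<in>J. L (osmult (k i j) (F i j)) c)"
      by simp
  qed
  also have "\<dots> = (\<lambda>c. \<Sum>i\<in>I. \<Sum>j\<in>J. k i j * L (F i j) c)"
  proof (intro ext sum.cong refl)
    fix c i j assume "i \<in> I" "j \<in> J"
    then have "L (osmult (k i j) (F i j)) = osmult (k i j) (L (F i j))"
      using L F unfolding olinear_def by blast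
    then show "L (osmult (k i j) (F i j)) c = k i j * L (F i j) c"
      by (simp add: osmult_def)
  qed
  finally show ?thesis .
qed

lemma obilinear_comp_left:
  assumes "obilinear n B" "olinear n L" "\<And>f g. f \<in> OA n \<Longrightarrow> g \<in> OA n \<Longrightarrow> B f g \<in> OA n"
  shows "obilinear n (\<lambda>f g. L (B f g))"
  using assms osmult_in_OA oadd_in_OA unfolding obilinear_def olinear_def by (simp add: Ball_def)

lemma obilinear_comp_right:
  assumes "obilinear n B" "olinear n L" "olinear n K"
    and "\<And>f. f \<in> OA n \<Longrightarrow> L f \<in> OA n" "\<And>f. f \<in> OA n \<Longrightarrow> K f \<in> OA n"
  shows "obilinear n (\<lambda>f g. B (L f) (K g))"
  using assms osmult_in_OA oadd_in_OA unfolding obilinear_def olinear_def by (simp add: Ball_def)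

lemma obilinear_lincomb:
  assumes "obilinear n B" "obilinear n C"
  shows "obilinear n (\<lambda>f g. oadd (B f g) (osmult k (C f g)))"
  using assms unfolding obilinear_def olinear_def
  by (simp add: oadd_def osmult_def fun_eq_iff algebra_simps)


section \<open>The differential\<close>

lemma is_diffD:
  assumes "is_diff n M d"
  shows "olinear n d"
    and "\<And>f. f \<in> OA n \<Longrightarrow> d f \<in> OA n"
    and "\<And>f. f \<notin> OA n \<Longrightarrow> d f = ozero"
    and "\<And>i. i < n \<Longrightarrow> d (xgen i) = (\<lambda>a. \<Sum>j<n. M $$ (i, j) * omul n (xgen j) (xgen j) a)"
    and "\<And>p f g. f \<in> OA n \<Longrightarrow> g \<in> OA n \<Longrightarrow> ohomog n p f \<Longrightarrow>
           d (omul n f g) = oadd (omul n (d f) g) (osmult ((-1) ^ p) (omul n f (d g)))"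
  using assms by (simp_all add: is_diff_def olinear_def)

lemma ohomog_oone: "ohomog n 0 oone"
  by (simp add: ohomog_def oone_eq_omon mdeg_def)

lemma ohomog_xgen: "i < n \<Longrightarrow> ohomog n 1 (xgen i)"
  by (simp add: ohomog_def xgen_eq_omon mdeg_unit_exp)

lemma is_diff_oone:
  assumes "is_diff n M d"
  shows "d oone = ozero"
proof -
  have "d oone = oadd (d oone) (d oone)"
    using is_diffD(5)[OF assms oone_in_OA oone_in_OA ohomog_oone] is_diffD(2)[OF assms oone_in_OA]
    by (simp add: omul_oone_left omul_oone_right oone_in_OA osmult_def)
  then show ?thesis
    unfolding fun_eq_iff oadd_def ozero_def by (metis add_cancel_right_right)
qed

text \<open>The induction step is the factorisation x^a = x_i x^b with x_i the first variable
  occurring in x^a, which carries no sign.\<close>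
lemma omon_induct:
  fixes P :: "((nat \<Rightarrow> nat) \<Rightarrow> 'k::field) \<Rightarrow> bool"
  assumes "a \<in> mons n"
    and "P oone"
    and "\<And>i b. i < n \<Longrightarrow> b \<in> mons n \<Longrightarrow> P (omon b) \<Longrightarrow> P (omul n (xgen i) (omon b))"
  shows "P (omon a)"
  using assms(1)
proof (induction "mdeg n a" arbitrary: a)
  case 0
  then have "a = (\<lambda>_. 0)"
    by (auto simp: mons_def mdeg_def fun_eq_iff not_less[symmetric])
  then show ?case using assms(2) by (simp add: oone_eq_omon)
next
  case (Suc k)
  have "\<exists>i. i < n \<and> a i \<noteq> 0"
  proof (rule ccontr)
    assume "\<not> ?thesis"
    then have "mdeg n a = 0" by (simp add: mdeg_def)
    with Suc.hyps(2) show False by simp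
  qed
  from exists_least_iff[THEN iffD1, OF this]
  obtain i where i: "i < n" "a i \<noteq> 0" and below: "\<forall>q<i. \<not> (q < n \<and> a q \<noteq> 0)"
    by blast
  define b where "b = a(i := a i - 1)"
  have b: "b \<in> mons n" using Suc.prems i by (auto simp: b_def mons_def)
  have a_eq: "exp_add (unit_exp i) b = a"
    using i by (auto simp: b_def unit_exp_def)
  have zero: "(\<Sum>p<n. \<Sum>q<p. unit_exp i p * b q) = 0"
    using below i by (auto simp: unit_exp_def b_def)
  have "msgn n (unit_exp i) b = (1::'k)"
    unfolding msgn_def zero by simp
  then have dec: "(omon a :: (nat \<Rightarrow> nat) \<Rightarrow> 'k) = omul n (xgen i) (omon b)"
    by (simp add: xgen_eq_omon omul_omon_omon a_eq osmult_def)
  have "mdeg n a = Suc (mdeg n b)"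
    using i(1) by (simp flip: a_eq add: mdeg_exp_add mdeg_unit_exp)
  with Suc.hyps(2) have "k = mdeg n b" by simp
  then have "P (omon b)" using Suc.hyps(1) b by blast
  then show ?case
    unfolding dec using assms(3) i(1) b by blast
qed

lemma is_diff_unique:
  assumes d1: "is_diff n M d1" and d2: "is_diff n M d2"
  shows "d1 = d2"
proof
  fix f
  show "d1 f = d2 f"
  proof (cases "f \<in> OA n")
    case True
    have "d1 (omon a) = d2 (omon a)" if "a \<in> mons n" for a
    proof (rule omon_induct[OF that, where P = "\<lambda>x. d1 x = d2 x"])
      show "d1 oone = d2 oone"
        using is_diff_oone[OF d1] is_diff_oone[OF d2] by simp
    next
      fix i b assume i: "i < n" and b: "b \<in> mons n" and IH: "d1 (omon b) = d2 (omon b)"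
      note leibniz = is_diffD(5)[OF _ xgen_in_OA[OF i] omon_in_OA[OF b] ohomog_xgen[OF i]]
      show "d1 (omul n (xgen i) (omon b)) = d2 (omul n (xgen i) (omon b))"
        using leibniz[OF d1] leibniz[OF d2] is_diffD(4)[OF d1 i] is_diffD(4)[OF d2 i] IH by simp
    qed
    then show ?thesis
      using olinear_eq_on_omon[OF is_diffD(1)[OF d1] is_diffD(1)[OF d2] True] True
      by (auto simp: OA_def)
  qed (simp add: is_diffD(3)[OF d1] is_diffD(3)[OF d2])
qed

definition exp_shift :: "(nat \<Rightarrow> nat) \<Rightarrow> nat \<Rightarrow> nat \<Rightarrow> nat \<Rightarrow> nat" where
  "exp_shift a i j = (\<lambda>t. a t - (if t = i then 1 else 0) + (if t = j then 2 else 0))"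

definition diff_coeff :: "'k::field mat \<Rightarrow> (nat \<Rightarrow> nat) \<Rightarrow> nat \<Rightarrow> nat \<Rightarrow> 'k" where
  "diff_coeff M a i j = (if odd (a i) then (-1) ^ (\<Sum>q<i. a q) * M $$ (i, j) else 0)"

text \<open>The squares x_j^2 are central and d(x_j^2) = 0, so the Leibniz rule forces
  d(x^a) = \<Sum> over odd a_i of (-1)^(a_0 + ... + a_(i-1)) x^(a - e_i) d(x_i), and
  x^(a - e_i) x_j^2 is the monomial with exponent exp_shift a i j.\<close>
definition diff_omon :: "nat \<Rightarrow> 'k::field mat \<Rightarrow> (nat \<Rightarrow> nat) \<Rightarrow> (nat \<Rightarrow> nat) \<Rightarrow> 'k" where
  "diff_omon n M a = (\<lambda>c. \<Sum>i<n. \<Sum>j<n. osmult (diff_coeff M a i j) (omon (exp_shift a i j)) c)"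

definition odiff :: "nat \<Rightarrow> 'k::field mat \<Rightarrow> ((nat \<Rightarrow> nat) \<Rightarrow> 'k) \<Rightarrow> (nat \<Rightarrow> nat) \<Rightarrow> 'k" where
  "odiff n M = linext n (diff_omon n M)"

lemma exp_shift_in_mons: "a \<in> mons n \<Longrightarrow> i < n \<Longrightarrow> j < n \<Longrightarrow> exp_shift a i j \<in> mons n"
  by (simp add: mons_def exp_shift_def)

lemma diff_omon_in_OA: "a \<in> mons n \<Longrightarrow> diff_omon n M a \<in> OA n"
  unfolding diff_omon_def
  by (intro sum_in_OA osmult_in_OA omon_in_OA exp_shift_in_mons) auto

lemma odiff_in_OA: "odiff n M f \<in> OA n"
  unfolding odiff_def by (rule linext_in_OA) (rule diff_omon_in_OA)

lemma odiff_xgen: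
  assumes "i < n"
  shows "odiff n M (xgen i) = (\<lambda>a. \<Sum>j<n. M $$ (i, j) * omul n (xgen j) (xgen j) a)"
proof
  fix c
  have "odiff n M (xgen i) c = (\<Sum>i'<n. \<Sum>j<n. if i' = i then M $$ (i, j) * omon (sq_exp j) c else 0)"
    unfolding odiff_def xgen_eq_omon linext_omon[OF unit_exp_in_mons[OF assms]] diff_omon_def
    by (intro sum.cong refl)
      (auto simp: osmult_def diff_coeff_def unit_exp_def exp_shift_def sq_exp_def)
  also have "\<dots> = (\<Sum>j<n. M $$ (i, j) * omul n (xgen j) (xgen j) c)"
    using assms by (subst sum.swap) (simp add: omul_xgen_self)
  finally show "odiff n M (xgen i) c = (\<Sum>j<n. M $$ (i, j) * omul n (xgen j) (xgen j) c)" .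
qed

lemma neg_one_power_eq_mult:
  assumes "X + W = Y + 2 * (Z::nat)"
  shows "(-1::'a::ring_1) ^ X = (-1) ^ Y * (-1) ^ W"
proof -
  have "(-1::'a) ^ X = (-1) ^ (X + 2 * W)" by (simp add: power_add power_mult)
  also have "X + 2 * W = (Y + W) + 2 * Z" using assms by simp
  finally show ?thesis by (simp add: power_add power_mult)
qed

lemma sum_exp_shift:
  fixes W :: "nat \<Rightarrow> nat"
  assumes "i < n" "j < n" "0 < x i"
  shows "(\<Sum>p<n. exp_shift x i j p * W p) + W i = (\<Sum>p<n. x p * W p) + 2 * W j"
proof -
  have "(\<Sum>p<n. exp_shift x i j p * W p + (if p = i then W p else 0))
      = (\<Sum>p<n. x p * W p + (if p = j then 2 * W p else 0))"
    by (rule sum.cong) (use assms in \<open>auto simp: exp_shift_def algebra_simps\<close>)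
  then show ?thesis using assms by (simp add: sum.distrib)
qed

lemma msgn_exp_shift_left:
  assumes "i < n" "j < n" "0 < a i"
  shows "msgn n (exp_shift a i j) b = (msgn n a b :: 'a::field) * (-1) ^ (\<Sum>q<i. b q)"
proof -
  define W where "W p = (\<Sum>q<p. b q)" for p
  have e: "(\<Sum>p<n. \<Sum>q<p. x p * b q) = (\<Sum>p<n. x p * W p)" for x
    by (simp add: W_def sum_distrib_left)
  have "(\<Sum>p<n. exp_shift a i j p * W p) + W i = (\<Sum>p<n. a p * W p) + 2 * W j"
    by (rule sum_exp_shift[where x = a, OF assms])
  then show ?thesis unfolding msgn_def e W_def[symmetric] by (rule neg_one_power_eq_mult)
qed

lemma msgn_exp_shift_right:
  assumes "i < n" "j < n" "0 < b i"
  shows "msgn n a (exp_shift b i j) = (msgn n a b :: 'a::field) * (-1) ^ (\<Sum>q\<in>{i<..<n}. a q)"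
proof -
  define W where "W q = (\<Sum>p<n. if q < p then a p else 0)" for q
  have e: "(\<Sum>p<n. \<Sum>q<n. if q < p then a p * y q else 0) = (\<Sum>q<n. y q * W q)" for y
  proof -
    have "(\<Sum>p<n. \<Sum>q<n. if q < p then a p * y q else 0)
        = (\<Sum>q<n. \<Sum>p<n. if q < p then a p * y q else 0)"
      by (rule sum.swap)
    also have "\<dots> = (\<Sum>q<n. y q * W q)"
      unfolding W_def by (simp add: sum_distrib_left mult_ac if_distrib cong: if_cong)
    finally show ?thesis .
  qed
  have "W i = (\<Sum>q\<in>{..<n} \<inter> {p. i < p}. a q)"
    unfolding W_def by (simp add: sum.inter_restrict)
  also have "{..<n} \<inter> {p. i < p} = {i<..<n}" by auto
  finally have Wi: "W i = (\<Sum>q\<in>{i<..<n}. a q)" .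
  have "(\<Sum>p<n. exp_shift b i j p * W p) + W i = (\<Sum>p<n. b p * W p) + 2 * W j"
    by (rule sum_exp_shift[where x = b, OF assms])
  then show ?thesis unfolding msgn_eq_sum_pairs e Wi[symmetric] by (rule neg_one_power_eq_mult)
qed

lemma sum_lessThan_split:
  fixes x :: "nat \<Rightarrow> 'a::comm_monoid_add"
  assumes "i < n"
  shows "(\<Sum>q<n. x q) = (\<Sum>q<i. x q) + x i + (\<Sum>q\<in>{i<..<n}. x q)"
proof -
  have "{..<n} = insert i ({..<i} \<union> {i<..<n})" using assms by auto
  moreover have "(\<Sum>q\<in>{..<i} \<union> {i<..<n}. x q) = (\<Sum>q<i. x q) + (\<Sum>q\<in>{i<..<n}. x q)"
    by (rule sum.union_disjoint) auto
  ultimately show ?thesis by (simp add: ac_simps)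
qed

lemma exp_shift_exp_add_left: "0 < a i \<Longrightarrow> exp_add (exp_shift a i j) b = exp_shift (exp_add a b) i j"
  by (auto simp: exp_shift_def)

lemma exp_shift_exp_add_right: "0 < b i \<Longrightarrow> exp_add a (exp_shift b i j) = exp_shift (exp_add a b) i j"
  by (auto simp: exp_shift_def)

text \<open>The sign identity behind the Leibniz rule on monomials, one pair (i, j) at a time.\<close>
lemma diff_coeff_exp_add:
  fixes M :: "'a::field mat"
  assumes i: "i < n" and j: "j < n"
  shows "msgn n a b * diff_coeff M (exp_add a b) i j
    = diff_coeff M a i j * msgn n (exp_shift a i j) b
      + (-1) ^ mdeg n a * (diff_coeff M b i j * msgn n a (exp_shift b i j))"
proof -
  define \<mu> where "\<mu> = (msgn n a b :: 'a)"
  define sA where "sA = (-1::'a) ^ (\<Sum>q<i. a q)"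
  define sB where "sB = (-1::'a) ^ (\<Sum>q<i. b q)"
  define tA where "tA = (-1::'a) ^ (\<Sum>q\<in>{i<..<n}. a q)"
  have tt: "tA * tA = 1" "tA * (tA * x) = x" for x
    unfolding tA_def by (simp_all flip: power_add add: mult_2[symmetric] power_mult)
  have sAB: "(-1::'a) ^ (\<Sum>q<i. a q + b q) = sA * sB"
    unfolding sA_def sB_def by (simp add: sum.distrib power_add)
  have deg: "(-1::'a) ^ mdeg n a = sA * (-1) ^ a i * tA"
    unfolding sA_def tA_def mdeg_def sum_lessThan_split[OF i, of a] by (simp add: power_add)
  have left: "msgn n (exp_shift a i j) b = \<mu> * sB" if "odd (a i)"
    unfolding \<mu>_def sB_def using that by (intro msgn_exp_shift_left[OF i j]) (simp add: odd_pos)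
  have right: "msgn n a (exp_shift b i j) = \<mu> * tA" if "odd (b i)"
    unfolding \<mu>_def tA_def using that by (intro msgn_exp_shift_right[OF i j]) (simp add: odd_pos)
  show ?thesis
    using tt left right
    by (cases "odd (a i)"; cases "odd (b i)")
      (simp_all add: diff_coeff_def deg sAB \<mu>_def[symmetric] sA_def[symmetric] sB_def[symmetric]
        tA_def[symmetric] algebra_simps)
qed

lemma omul_odiff_omon_left:
  fixes M :: "'k::field mat"
  assumes a: "a \<in> mons n" and b: "b \<in> mons n"
  shows "omul n (odiff n M (omon a)) (omon b) = (\<lambda>c. \<Sum>i<n. \<Sum>j<n.
    diff_coeff M a i j * (msgn n (exp_shift a i j) b * omon (exp_add (exp_shift a i j) b) c))"
proof -
  have "omul n (odiff n M (omon a)) (omon b)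
      = (\<lambda>c. \<Sum>i<n. \<Sum>j<n. diff_coeff M a i j * omul n (omon (exp_shift a i j)) (omon b) c)"
    unfolding odiff_def linext_omon[OF a] diff_omon_def
    using obilinear_omul[of n] omon_in_OA[OF b] exp_shift_in_mons[OF a]
    by (intro olinear_double_sum[where L = "\<lambda>f. omul n f (omon b)"])
      (auto simp: obilinear_def intro: omon_in_OA)
  then show ?thesis by (simp add: omul_omon_omon osmult_def)
qed

lemma omul_odiff_omon_right:
  fixes M :: "'k::field mat"
  assumes a: "a \<in> mons n" and b: "b \<in> mons n"
  shows "omul n (omon a) (odiff n M (omon b)) = (\<lambda>c. \<Sum>i<n. \<Sum>j<n.
    diff_coeff M b i j * (msgn n a (exp_shift b i j) * omon (exp_add a (exp_shift b i j)) c))"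
proof -
  have "omul n (omon a) (odiff n M (omon b))
      = (\<lambda>c. \<Sum>i<n. \<Sum>j<n. diff_coeff M b i j * omul n (omon a) (omon (exp_shift b i j)) c)"
    unfolding odiff_def linext_omon[OF b] diff_omon_def
    using obilinear_omul[of n] omon_in_OA[OF a] exp_shift_in_mons[OF b]
    by (intro olinear_double_sum[where L = "omul n (omon a)"])
      (auto simp: obilinear_def intro: omon_in_OA)
  then show ?thesis by (simp add: omul_omon_omon osmult_def)
qed

lemma diff_coeff_leibniz_term:
  fixes M :: "'k::field mat"
  assumes "i < n" "j < n"
  shows "diff_coeff M a i j * (msgn n (exp_shift a i j) b * omon (exp_add (exp_shift a i j) b) c)
      + (-1) ^ mdeg n a * (diff_coeff M b i j * (msgn n a (exp_shift b i j) * omon (exp_add a (exp_shift b i j)) c))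
    = msgn n a b * diff_coeff M (exp_add a b) i j * omon (exp_shift (exp_add a b) i j) c"
proof -
  let ?X = "omon (exp_shift (exp_add a b) i j) c :: 'k"
  have A: "diff_coeff M a i j * (msgn n (exp_shift a i j) b * omon (exp_add (exp_shift a i j) b) c)
      = diff_coeff M a i j * msgn n (exp_shift a i j) b * ?X"
    by (cases "odd (a i)") (simp_all add: diff_coeff_def exp_shift_exp_add_left odd_pos mult_ac)
  have B: "diff_coeff M b i j * (msgn n a (exp_shift b i j) * omon (exp_add a (exp_shift b i j)) c)
      = diff_coeff M b i j * msgn n a (exp_shift b i j) * ?X"
    by (cases "odd (b i)") (simp_all add: diff_coeff_def exp_shift_exp_add_right odd_pos mult_ac)
  show ?thesis
    unfolding A B diff_coeff_exp_add[OF assms] by (simp add: algebra_simps)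
qed

lemma odiff_leibniz_omon:
  fixes M :: "'k::field mat"
  assumes a: "a \<in> mons n" and b: "b \<in> mons n"
  shows "odiff n M (omul n (omon a) (omon b))
    = oadd (omul n (odiff n M (omon a)) (omon b))
        (osmult ((-1) ^ mdeg n a) (omul n (omon a) (odiff n M (omon b))))"
proof
  fix c
  have ab: "exp_add a b \<in> mons n" by (rule exp_add_in_mons[OF a b])
  have "odiff n M (omul n (omon a) (omon b)) = osmult (msgn n a b) (odiff n M (omon (exp_add a b)))"
    using olinear_linext omon_in_OA[OF ab] unfolding omul_omon_omon olinear_def odiff_def by blast
  then have "odiff n M (omul n (omon a) (omon b)) c = (\<Sum>i<n. \<Sum>j<n.
      msgn n a b * diff_coeff M (exp_add a b) i j * omon (exp_shift (exp_add a b) i j) c)"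
    by (simp add: odiff_def linext_omon[OF ab] diff_omon_def osmult_def sum_distrib_left mult.assoc)
  also have "\<dots> = (\<Sum>i<n. \<Sum>j<n.
      diff_coeff M a i j * (msgn n (exp_shift a i j) b * omon (exp_add (exp_shift a i j) b) c)
      + (-1) ^ mdeg n a * (diff_coeff M b i j * (msgn n a (exp_shift b i j) * omon (exp_add a (exp_shift b i j)) c)))"
    by (intro sum.cong refl, rule diff_coeff_leibniz_term[symmetric]) simp_all
  also have "\<dots> = oadd (omul n (odiff n M (omon a)) (omon b))
      (osmult ((-1) ^ mdeg n a) (omul n (omon a) (odiff n M (omon b)))) c"
    unfolding oadd_def osmult_def omul_odiff_omon_left[OF a b] omul_odiff_omon_right[OF a b]
    by (simp add: sum_distrib_left sum.distrib)
  finally show "odiff n M (omul n (omon a) (omon b)) c = oadd (omul n (odiff n M (omon a)) (omon b))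
      (osmult ((-1) ^ mdeg n a) (omul n (omon a) (odiff n M (omon b)))) c" .
qed

lemma odiff_leibniz:
  fixes M :: "'k::field mat"
  assumes f: "f \<in> OA n" and g: "g \<in> OA n" and deg: "ohomog n p f"
  shows "odiff n M (omul n f g) = oadd (omul n (odiff n M f) g) (osmult ((-1) ^ p) (omul n f (odiff n M g)))"
proof -
  have lin: "olinear n (odiff n M)" by (simp add: odiff_def olinear_linext)
  show ?thesis
  proof (rule obilinear_eq_on_omon[where B = "\<lambda>f g. odiff n M (omul n f g)"
        and C = "\<lambda>f g. oadd (omul n (odiff n M f) g) (osmult ((-1) ^ p) (omul n f (odiff n M g)))",
        OF _ _ f g])
    show "obilinear n (\<lambda>f g. odiff n M (omul n f g))"
      by (rule obilinear_comp_left[OF obilinear_omul lin omul_in_OA])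
    show "obilinear n (\<lambda>f g. oadd (omul n (odiff n M f) g) (osmult ((-1) ^ p) (omul n f (odiff n M g))))"
      by (intro obilinear_lincomb obilinear_comp_right[OF obilinear_omul, where K = "\<lambda>f. f"]
          obilinear_comp_right[OF obilinear_omul, where L = "\<lambda>f. f"] lin olinear_id odiff_in_OA)
    fix a b assume "a \<in> supp f" "b \<in> supp g"
    then have "a \<in> mons n" "b \<in> mons n" "mdeg n a = p"
      using f g deg by (auto simp: OA_def ohomog_def)
    then show "odiff n M (omul n (omon a) (omon b))
      = oadd (omul n (odiff n M (omon a)) (omon b)) (osmult ((-1) ^ p) (omul n (omon a) (odiff n M (omon b))))"
      using odiff_leibniz_omon[of a n b M] by simp
  qed
qed

lemma is_diff_odiff: "is_diff n M (odiff n M)"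
proof -
  have "olinear n (odiff n M)" by (simp add: odiff_def olinear_linext)
  moreover have "f \<notin> OA n \<Longrightarrow> odiff n M f = ozero" for f
    by (simp add: odiff_def linext_def)
  ultimately show ?thesis
    unfolding is_diff_def olinear_def by (simp add: odiff_in_OA odiff_xgen odiff_leibniz)
qed

lemma is_diff_dga_diff: "is_diff n M (dga_diff n M)"
  unfolding dga_diff_def by (rule theI[of _ "odiff n M"]) (use is_diff_odiff is_diff_unique in blast)+


section \<open>Graded automorphisms and their matrices\<close>

lemma graded_alg_isoD:
  assumes "graded_alg_iso n \<phi>"
  shows "olinear n \<phi>"
    and "\<And>f. f \<in> OA n \<Longrightarrow> \<phi> f \<in> OA n"
    and "inj_on \<phi> (OA n)"
    and "\<And>f g. f \<in> OA n \<Longrightarrow> g \<in> OA n \<Longrightarrow> \<phi> (omul n f g) = omul n (\<phi> f) (\<phi> g)"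
    and "\<phi> oone = oone"
    and "\<And>d f. f \<in> OA n \<Longrightarrow> ohomog n d f \<Longrightarrow> ohomog n d (\<phi> f)"
  using assms unfolding graded_alg_iso_def olinear_def bij_betw_def by blast+

text \<open>A graded algebra isomorphism commutes with the differentials as soon as it does so on
  the generators: both composites are linear, and the Leibniz rules propagate the identity
  along the normal form x^a = x_i x^b.\<close>
lemma dga_diff_commute_of_xgen:
  fixes \<phi> :: "((nat \<Rightarrow> nat) \<Rightarrow> 'k::field) \<Rightarrow> (nat \<Rightarrow> nat) \<Rightarrow> 'k"
  assumes \<phi>: "graded_alg_iso n \<phi>"
    and gen: "\<And>i. i < n \<Longrightarrow> \<phi> (dga_diff n M (xgen i)) = dga_diff n M' (\<phi> (xgen i))"
    and f: "f \<in> OA n"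
  shows "\<phi> (dga_diff n M f) = dga_diff n M' (\<phi> f)"
proof -
  let ?d = "dga_diff n M" and ?d' = "dga_diff n M'"
  note d = is_diffD[OF is_diff_dga_diff[of n M]]
    and d' = is_diffD[OF is_diff_dga_diff[of n M']]
    and iso = graded_alg_isoD[OF \<phi>]
  have mon: "\<phi> (?d (omon a)) = ?d' (\<phi> (omon a))" if "a \<in> mons n" for a
  proof (rule omon_induct[OF that, where P = "\<lambda>x. \<phi> (?d x) = ?d' (\<phi> x)"])
    show "\<phi> (?d oone) = ?d' (\<phi> oone)"
      by (simp add: is_diff_oone[OF is_diff_dga_diff] olinear_ozero[OF iso(1)] iso(5))
  next
    fix i b assume i: "i < n" and b: "b \<in> mons n" and IH: "\<phi> (?d (omon b)) = ?d' (\<phi> (omon b))"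
    have x: "(xgen i :: (nat \<Rightarrow> nat) \<Rightarrow> 'k) \<in> OA n" "ohomog n 1 (xgen i :: (nat \<Rightarrow> nat) \<Rightarrow> 'k)"
      and m: "(omon b :: (nat \<Rightarrow> nat) \<Rightarrow> 'k) \<in> OA n"
      by (rule xgen_in_OA[OF i], rule ohomog_xgen[OF i], rule omon_in_OA[OF b])
    have "\<phi> (?d (omul n (xgen i) (omon b)))
        = \<phi> (oadd (omul n (?d (xgen i)) (omon b)) (osmult (-1) (omul n (xgen i) (?d (omon b)))))"
      using d(5)[OF x(1) m x(2)] by simp
    also have "\<dots> = oadd (omul n (\<phi> (?d (xgen i))) (\<phi> (omon b)))
        (osmult (-1) (omul n (\<phi> (xgen i)) (\<phi> (?d (omon b)))))"
      using iso(1) iso(4) d(2) x m unfolding olinear_def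
      by (simp add: Ball_def omul_in_OA osmult_in_OA)
    also have "\<dots> = oadd (omul n (?d' (\<phi> (xgen i))) (\<phi> (omon b)))
        (osmult (-1) (omul n (\<phi> (xgen i)) (?d' (\<phi> (omon b)))))"
      using gen[OF i] IH by simp
    also have "\<dots> = ?d' (omul n (\<phi> (xgen i)) (\<phi> (omon b)))"
      using d'(5)[OF iso(2)[OF x(1)] iso(2)[OF m] iso(6)[OF x]] by simp
    also have "\<dots> = ?d' (\<phi> (omul n (xgen i) (omon b)))"
      using iso(4)[OF x(1) m] by simp
    finally show "\<phi> (?d (omul n (xgen i) (omon b))) = ?d' (\<phi> (omul n (xgen i) (omon b)))" .
  qed
  have lin: "olinear n (\<lambda>f. \<phi> (?d f))" "olinear n (\<lambda>f. ?d' (\<phi> f))"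
    using olinear_comp[of n \<phi> ?d, OF iso(1) d(1) d(2)] olinear_comp[of n ?d' \<phi>, OF d'(1) iso(1) iso(2)]
    by simp_all
  show ?thesis
    by (rule olinear_eq_on_omon[OF lin f]) (use mon f in \<open>auto simp: OA_def\<close>)
qed

definition lin_form :: "nat \<Rightarrow> (nat \<Rightarrow> 'k::field) \<Rightarrow> (nat \<Rightarrow> nat) \<Rightarrow> 'k" where
  "lin_form n u = (\<lambda>a. \<Sum>j<n. u j * xgen j a)"

definition sq_form :: "nat \<Rightarrow> (nat \<Rightarrow> 'k::field) \<Rightarrow> (nat \<Rightarrow> nat) \<Rightarrow> 'k" where
  "sq_form n v = (\<lambda>a. \<Sum>m<n. v m * omon (sq_exp m) a)"

lemma lin_form_eq_sum: "lin_form n u = (\<lambda>a. \<Sum>j<n. osmult (u j) (xgen j) a)"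
  by (simp add: lin_form_def osmult_def)

lemma sq_form_apply: "m < n \<Longrightarrow> sq_form n v (sq_exp m) = v m"
  by (simp add: sq_form_def omon_def sq_exp_eq_iff if_distrib[of "\<lambda>x. _ * x"] cong: if_cong)

lemma sq_form_eq_iff: "sq_form n v = sq_form n w \<longleftrightarrow> (\<forall>m<n. v m = w m)"
proof
  assume eq: "sq_form n v = sq_form n w"
  show "\<forall>m<n. v m = w m"
  proof (intro allI impI)
    fix m assume "m < n"
    moreover have "sq_form n v (sq_exp m) = sq_form n w (sq_exp m)" using eq by simp
    ultimately show "v m = w m" by (simp add: sq_form_apply)
  qed
qed (simp add: sq_form_def)

lemma sum_sq_form: "(\<lambda>a. \<Sum>j\<in>J. k j * sq_form n (v j) a) = sq_form n (\<lambda>m. \<Sum>j\<in>J. k j * v j m)"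
proof
  fix a
  have "(\<Sum>j\<in>J. k j * sq_form n (v j) a) = (\<Sum>j\<in>J. \<Sum>m<n. k j * v j m * omon (sq_exp m) a)"
    by (simp add: sq_form_def sum_distrib_left mult.assoc)
  also have "\<dots> = sq_form n (\<lambda>m. \<Sum>j\<in>J. k j * v j m) a"
    by (subst sum.swap) (simp add: sq_form_def sum_distrib_right)
  finally show "(\<Sum>j\<in>J. k j * sq_form n (v j) a) = sq_form n (\<lambda>m. \<Sum>j\<in>J. k j * v j m) a" .
qed

lemma dga_diff_xgen: "i < n \<Longrightarrow> dga_diff n M (xgen i) = sq_form n (\<lambda>j. M $$ (i, j))"
  using is_diffD(4)[OF is_diff_dga_diff] by (simp add: sq_form_def omul_xgen_self)

lemma mdeg_1_unit_exp:
  assumes a: "a \<in> mons n" and deg: "mdeg n a = 1"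
  shows "\<exists>j<n. a = unit_exp j"
proof -
  have "\<exists>j<n. a j \<noteq> 0"
    by (rule ccontr) (use deg in \<open>simp add: mdeg_def\<close>)
  then obtain j where j: "j < n" "a j \<noteq> 0" by blast
  have "a j + (\<Sum>q\<in>{..<n} - {j}. a q) = 1"
    using deg j by (simp add: mdeg_def sum.remove)
  then have "a j = 1" "(\<Sum>q\<in>{..<n} - {j}. a q) = 0"
    using j(2) by linarith+
  then have "a j = 1" "\<forall>q\<in>{..<n} - {j}. a q = 0"
    by simp_all
  then have "a = unit_exp j"
    using a by (auto simp: unit_exp_def mons_def fun_eq_iff not_less[symmetric])
  with j show ?thesis by blast
qed

lemma ohomog_1_eq_lin_form:
  assumes g: "g \<in> OA n" and deg: "ohomog n 1 g"
  shows "g = lin_form n (\<lambda>j. g (unit_exp j))"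
proof
  fix a
  show "g a = lin_form n (\<lambda>j. g (unit_exp j)) a"
  proof (cases "\<exists>j<n. a = unit_exp j")
    case True
    then obtain j0 where j0: "j0 < n" "a = unit_exp j0" by blast
    then have "lin_form n (\<lambda>j. g (unit_exp j)) a = (\<Sum>j<n. if j = j0 then g (unit_exp j) else 0)"
      unfolding lin_form_def by (intro sum.cong refl) (auto simp: xgen_eq_omon omon_def unit_exp_eq_iff)
    with j0 show ?thesis by simp
  next
    case False
    have "a \<notin> supp g"
    proof
      assume "a \<in> supp g"
      then have "a \<in> mons n" "mdeg n a = 1"
        using g deg by (auto simp: OA_def ohomog_def)
      then show False using mdeg_1_unit_exp False by blast
    qed
    then show ?thesis
      using False by (auto simp: supp_def lin_form_def xgen_eq_omon omon_def intro!: sum.neutral)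
  qed
qed

lemma omul_lin_form:
  "omul n (lin_form n u) (lin_form n v) = (\<lambda>a. \<Sum>j<n. \<Sum>l<n. u j * v l * omul n (xgen j) (xgen l) a)"
  unfolding lin_form_eq_sum
  by (rule obilinear_lincomb_expand[OF obilinear_omul]) (simp_all add: xgen_in_OA)

lemma lin_form_anticommutator:
  fixes u v :: "nat \<Rightarrow> 'k::field"
  shows "oadd (omul n (lin_form n u) (lin_form n v)) (omul n (lin_form n v) (lin_form n u))
    = sq_form n (\<lambda>m. 2 * (u m * v m))"
proof (rule ext)
  fix a
  have anti: "omul n (xgen j) (xgen l) a + omul n (xgen l) (xgen j) a
      = (if l = j then 2 * omon (sq_exp j) a else (0::'k))" if "j < n" "l < n" for j l
  proof (cases "l = j")
    case True
    then show ?thesis by (simp add: omul_xgen_self)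
  next
    case False
    then have "oadd (omul n (xgen j) (xgen l)) (omul n (xgen l) (xgen j)) = (ozero :: (nat \<Rightarrow> nat) \<Rightarrow> 'k)"
      using that by (intro xgen_anticommute) auto
    then show ?thesis
      using False by (simp add: oadd_def ozero_def fun_eq_iff)
  qed
  have swap: "(\<Sum>j<n. \<Sum>l<n. v j * u l * omul n (xgen j) (xgen l) a)
      = (\<Sum>j<n. \<Sum>l<n. u j * v l * omul n (xgen l) (xgen j) a)"
    by (subst sum.swap) (simp add: mult_ac)
  have "oadd (omul n (lin_form n u) (lin_form n v)) (omul n (lin_form n v) (lin_form n u)) a
      = (\<Sum>j<n. \<Sum>l<n. u j * v l * (omul n (xgen j) (xgen l) a + omul n (xgen l) (xgen j) a))"
    unfolding oadd_def omul_lin_form swap by (simp add: distrib_left sum.distrib)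
  also have "\<dots> = (\<Sum>j<n. \<Sum>l<n. if l = j then 2 * (u j * v j) * omon (sq_exp j) a else 0)"
    by (intro sum.cong refl) (simp add: anti)
  also have "\<dots> = sq_form n (\<lambda>m. 2 * (u m * v m)) a"
    unfolding sq_form_def by (intro sum.cong refl) simp
  finally show "oadd (omul n (lin_form n u) (lin_form n v)) (omul n (lin_form n v) (lin_form n u)) a
      = sq_form n (\<lambda>m. 2 * (u m * v m)) a" .
qed

lemma lin_form_square:
  fixes u :: "nat \<Rightarrow> 'k::field_char_0"
  shows "omul n (lin_form n u) (lin_form n u) = sq_form n (\<lambda>m. u m ^ 2)"
proof
  fix a
  let ?X = "omul n (lin_form n u) (lin_form n u) a" and ?Y = "sq_form n (\<lambda>m. u m ^ 2) a"
  have "?X + ?X = sq_form n (\<lambda>m. 2 * (u m * u m)) a"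
    using fun_cong[OF lin_form_anticommutator[of n u u], of a] by (simp add: oadd_def)
  also have "\<dots> = 2 * ?Y"
    by (simp add: sq_form_def sum_distrib_left power2_eq_square mult.assoc)
  finally have "2 * ?X = 2 * ?Y" by (simp only: mult_2[of ?X])
  then show "?X = ?Y" by simp
qed

text \<open>The matrix C with \<phi>(x_i) = \<Sum>_j C_ij x_j.\<close>
definition coeff_mat :: "nat \<Rightarrow> (((nat \<Rightarrow> nat) \<Rightarrow> 'k::field) \<Rightarrow> (nat \<Rightarrow> nat) \<Rightarrow> 'k) \<Rightarrow> 'k mat" where
  "coeff_mat n \<phi> = mat n n (\<lambda>(i, j). \<phi> (xgen i) (unit_exp j))"

lemma coeff_mat_carrier [simp]: "coeff_mat n \<phi> \<in> carrier_mat n n"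
  by (simp add: coeff_mat_def)

lemma dim_coeff_mat [simp]: "dim_row (coeff_mat n \<phi>) = n" "dim_col (coeff_mat n \<phi>) = n"
  by (simp_all add: coeff_mat_def)

lemma coeff_mat_index [simp]: "i < n \<Longrightarrow> j < n \<Longrightarrow> coeff_mat n \<phi> $$ (i, j) = \<phi> (xgen i) (unit_exp j)"
  by (simp add: coeff_mat_def)

lemma graded_alg_iso_xgen:
  assumes \<phi>: "graded_alg_iso n \<phi>" and i: "i < n"
  shows "\<phi> (xgen i) = lin_form n (\<lambda>j. coeff_mat n \<phi> $$ (i, j))"
proof -
  have "\<phi> (xgen i) = lin_form n (\<lambda>j. \<phi> (xgen i) (unit_exp j))"
    using graded_alg_isoD(2,6)[OF \<phi>] xgen_in_OA[OF i] ohomog_xgen[OF i]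
    by (intro ohomog_1_eq_lin_form) auto
  also have "\<dots> = lin_form n (\<lambda>j. coeff_mat n \<phi> $$ (i, j))"
    unfolding lin_form_def using i by (intro ext sum.cong refl) simp
  finally show ?thesis .
qed

lemma mult_mat_entry:
  assumes "A \<in> carrier_mat n n" "B \<in> carrier_mat n n" "i < n" "j < n"
  shows "(A * B) $$ (i, j) = (\<Sum>t<n. A $$ (i, t) * B $$ (t, j))"
  using assms by (simp add: scalar_prod_def atLeast0LessThan)

lemma graded_alg_iso_dga_diff_xgen:
  fixes \<phi> :: "((nat \<Rightarrow> nat) \<Rightarrow> 'k::field_char_0) \<Rightarrow> (nat \<Rightarrow> nat) \<Rightarrow> 'k"
  assumes \<phi>: "graded_alg_iso n \<phi>" and i: "i < n" and M: "M \<in> carrier_mat n n"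
  shows "\<phi> (dga_diff n M (xgen i)) = sq_form n (\<lambda>m. (M * map_mat (\<lambda>c. c ^ 2) (coeff_mat n \<phi>)) $$ (i, m))"
proof -
  let ?C = "coeff_mat n \<phi>"
  have sq: "omul n (xgen j) (xgen j) \<in> OA n" if "j < n" for j
    using that by (simp add: omul_xgen_self omon_in_OA mons_def sq_exp_def)
  have "\<phi> (dga_diff n M (xgen i)) = \<phi> (\<lambda>a. \<Sum>j<n. osmult (M $$ (i, j)) (omul n (xgen j) (xgen j)) a)"
    by (simp add: is_diffD(4)[OF is_diff_dga_diff i] osmult_def)
  also have "\<dots> = (\<lambda>a. \<Sum>j<n. M $$ (i, j) * \<phi> (omul n (xgen j) (xgen j)) a)"
    using sq by (intro olinear_lincomb[OF graded_alg_isoD(1)[OF \<phi>]]) auto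
  also have "\<dots> = (\<lambda>a. \<Sum>j<n. M $$ (i, j) * sq_form n (\<lambda>m. ?C $$ (j, m) ^ 2) a)"
    by (intro ext sum.cong refl)
      (simp add: graded_alg_isoD(4)[OF \<phi> xgen_in_OA xgen_in_OA] graded_alg_iso_xgen[OF \<phi>] lin_form_square)
  also have "\<dots> = sq_form n (\<lambda>m. (M * map_mat (\<lambda>c. c ^ 2) ?C) $$ (i, m))"
    unfolding sum_sq_form sq_form_eq_iff using M i
    by (auto simp: mult_mat_entry[of _ n] simp del: index_mult_mat intro!: sum.cong)
  finally show ?thesis .
qed

lemma dga_diff_graded_alg_iso_xgen:
  assumes \<phi>: "graded_alg_iso n \<phi>" and i: "i < n" and M': "M' \<in> carrier_mat n n"
  shows "dga_diff n M' (\<phi> (xgen i)) = sq_form n (\<lambda>m. (coeff_mat n \<phi> * M') $$ (i, m))"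
proof -
  let ?C = "coeff_mat n \<phi>"
  have "dga_diff n M' (\<phi> (xgen i)) = dga_diff n M' (\<lambda>a. \<Sum>j<n. osmult (?C $$ (i, j)) (xgen j) a)"
    by (simp add: graded_alg_iso_xgen[OF \<phi> i] lin_form_eq_sum)
  also have "\<dots> = (\<lambda>a. \<Sum>j<n. ?C $$ (i, j) * sq_form n (\<lambda>m. M' $$ (j, m)) a)"
    by (subst olinear_lincomb[OF is_diffD(1)[OF is_diff_dga_diff]])
      (auto intro!: xgen_in_OA ext sum.cong simp: dga_diff_xgen)
  also have "\<dots> = sq_form n (\<lambda>m. (?C * M') $$ (i, m))"
    unfolding sum_sq_form sq_form_eq_iff using M' i
    by (simp add: mult_mat_entry[of _ n] del: index_mult_mat)
  finally show ?thesis .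
qed

lemma graded_alg_iso_commutes_dga_diff_iff:
  fixes \<phi> :: "((nat \<Rightarrow> nat) \<Rightarrow> 'k::field_char_0) \<Rightarrow> (nat \<Rightarrow> nat) \<Rightarrow> 'k"
  assumes \<phi>: "graded_alg_iso n \<phi>" and M: "M \<in> carrier_mat n n" and M': "M' \<in> carrier_mat n n"
  shows "(\<forall>f\<in>OA n. \<phi> (dga_diff n M f) = dga_diff n M' (\<phi> f))
    \<longleftrightarrow> M * map_mat (\<lambda>c. c ^ 2) (coeff_mat n \<phi>) = coeff_mat n \<phi> * M'"
  (is "?commutes \<longleftrightarrow> ?L = ?R")
proof -
  have gen: "\<phi> (dga_diff n M (xgen i)) = dga_diff n M' (\<phi> (xgen i)) \<longleftrightarrow> (\<forall>m<n. ?L $$ (i, m) = ?R $$ (i, m))"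
    if "i < n" for i
    by (simp add: graded_alg_iso_dga_diff_xgen[OF \<phi> that M]
        dga_diff_graded_alg_iso_xgen[OF \<phi> that M'] sq_form_eq_iff)
  have carrier: "?L \<in> carrier_mat n n" "?R \<in> carrier_mat n n"
    using M M' by (auto intro!: mult_carrier_mat)
  have "?L = ?R \<longleftrightarrow> (\<forall>i<n. \<forall>m<n. ?L $$ (i, m) = ?R $$ (i, m))"
  proof (intro iffI allI impI)
    assume entries: "\<forall>i<n. \<forall>m<n. ?L $$ (i, m) = ?R $$ (i, m)"
    show "?L = ?R"
    proof (rule eq_matI)
      fix i m assume "i < dim_row ?R" "m < dim_col ?R"
      then have "i < n" "m < n" using carrier(2) by (simp_all only: carrier_mat_def mem_Collect_eq)
      then show "?L $$ (i, m) = ?R $$ (i, m)" using entries by blast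
    qed (use carrier in \<open>simp_all only: carrier_mat_def mem_Collect_eq\<close>)
  qed simp
  also have "\<dots> \<longleftrightarrow> ?commutes"
  proof
    assume rows: "\<forall>i<n. \<forall>m<n. ?L $$ (i, m) = ?R $$ (i, m)"
    show ?commutes
    proof
      fix f :: "(nat \<Rightarrow> nat) \<Rightarrow> 'k" assume "f \<in> OA n"
      show "\<phi> (dga_diff n M f) = dga_diff n M' (\<phi> f)"
        by (rule dga_diff_commute_of_xgen[OF \<phi> _ \<open>f \<in> OA n\<close>]) (use gen rows in auto)
    qed
  next
    assume ?commutes
    then have "\<phi> (dga_diff n M (xgen i)) = dga_diff n M' (\<phi> (xgen i))" if "i < n" for i
      using xgen_in_OA[OF that] by blast
    then show "\<forall>i<n. \<forall>m<n. ?L $$ (i, m) = ?R $$ (i, m)"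
      using gen by blast
  qed
  finally show ?thesis ..
qed


section \<open>Quasi-permutation matrices\<close>

lemma support_perm_exists:
  fixes c :: "nat \<Rightarrow> nat \<Rightarrow> 'a::zero"
  assumes rows: "\<And>i. i < n \<Longrightarrow> \<exists>j<n. c i j \<noteq> 0"
    and cols: "\<And>i k j. i < n \<Longrightarrow> k < n \<Longrightarrow> j < n \<Longrightarrow> c i j \<noteq> 0 \<Longrightarrow> c k j \<noteq> 0 \<Longrightarrow> i = k"
  shows "\<exists>\<sigma>. \<sigma> permutes {..<n} \<and> (\<forall>i<n. \<forall>j<n. c i j \<noteq> 0 \<longleftrightarrow> j = \<sigma> i)"
proof -
  define \<sigma> where "\<sigma> i = (if i < n then SOME j. j < n \<and> c i j \<noteq> 0 else i)" for i
  have \<sigma>: "\<sigma> i < n" "c i (\<sigma> i) \<noteq> 0" if "i < n" for i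
    using someI_ex[OF rows[OF that]] that by (simp_all add: \<sigma>_def)
  have inj: "inj_on \<sigma> {..<n}"
  proof (rule inj_onI)
    fix i k assume "i \<in> {..<n}" "k \<in> {..<n}" "\<sigma> i = \<sigma> k"
    then show "i = k" using \<sigma>[of i] \<sigma>[of k] cols[of i k "\<sigma> i"] by auto
  qed
  have onto: "\<sigma> ` {..<n} = {..<n}"
    by (rule endo_inj_surj) (use \<sigma> inj in auto)
  have perm: "\<sigma> permutes {..<n}"
  proof (rule bij_imp_permutes)
    show "bij_betw \<sigma> {..<n} {..<n}" using inj onto by (simp add: bij_betw_def)
  qed (simp add: \<sigma>_def)
  have supp: "c i j \<noteq> 0 \<longleftrightarrow> j = \<sigma> i" if i: "i < n" and j: "j < n" for i j
  proof
    assume nz: "c i j \<noteq> 0"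
    obtain k where k: "k < n" "j = \<sigma> k"
      using onto j by (metis imageE lessThan_iff)
    then show "j = \<sigma> i" using cols[OF i k(1) j nz] \<sigma>(2)[OF k(1)] by auto
  qed (use \<sigma> i in simp)
  with perm show ?thesis by blast
qed

lemma quasi_perm_mat_inverse:
  fixes C :: "'k::field mat"
  assumes C: "C \<in> carrier_mat n n" and \<sigma>: "\<sigma> permutes {..<n}"
    and supp_all: "\<forall>i<n. \<forall>j<n. C $$ (i, j) \<noteq> 0 \<longleftrightarrow> j = \<sigma> i"
  defines "D \<equiv> mat n n (\<lambda>(j, i). if j = \<sigma> i then inverse (C $$ (i, j)) else 0)"
  shows "D \<in> carrier_mat n n" "C * D = 1\<^sub>m n" "D * C = 1\<^sub>m n"
proof -
  note supp = supp_all[rule_format]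
  show D: "D \<in> carrier_mat n n" by (simp add: D_def)
  have \<sigma>n: "\<sigma> i < n" if "i < n" for i
    using permutes_in_image[OF \<sigma>] that by simp
  show CD: "C * D = 1\<^sub>m n"
  proof (rule eq_matI)
    fix i k assume "i < dim_row (1\<^sub>m n :: 'k mat)" "k < dim_col (1\<^sub>m n :: 'k mat)"
    then have i: "i < n" and k: "k < n" by simp_all
    have "(C * D) $$ (i, k) = (\<Sum>t<n. C $$ (i, t) * D $$ (t, k))"
      by (rule mult_mat_entry[OF C D i k])
    also have "\<dots> = (\<Sum>t<n. if t = \<sigma> k then C $$ (i, t) * inverse (C $$ (k, t)) else 0)"
      using k by (intro sum.cong refl) (simp add: D_def)
    also have "\<dots> = C $$ (i, \<sigma> k) * inverse (C $$ (k, \<sigma> k))"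
      using \<sigma>n[OF k] by simp
    also have "\<dots> = 1\<^sub>m n $$ (i, k)"
    proof (cases "i = k")
      case True
      then show ?thesis using supp[OF k \<sigma>n[OF k]] i by simp
    next
      case False
      then have "\<sigma> k \<noteq> \<sigma> i" using permutes_inj[OF \<sigma>] by (auto dest: injD)
      then have "C $$ (i, \<sigma> k) = 0" using supp[OF i \<sigma>n[OF k]] by simp
      then show ?thesis using False i k by simp
    qed
    finally show "(C * D) $$ (i, k) = 1\<^sub>m n $$ (i, k)" .
  qed (use C in \<open>simp_all add: carrier_matD D_def\<close>)
  show "D * C = 1\<^sub>m n"
    by (rule mat_mult_left_right_inverse[OF C D CD])
qed

lemma quasi_perm_in_QPL:
  fixes C :: "'k::field mat"
  assumes C: "C \<in> carrier_mat n n" and \<sigma>: "\<sigma> permutes {..<n}"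
    and supp_all: "\<forall>i<n. \<forall>j<n. C $$ (i, j) \<noteq> 0 \<longleftrightarrow> j = \<sigma> i"
  shows "C \<in> QPL n"
proof -
  note supp = supp_all[rule_format]
  obtain D where D: "D \<in> carrier_mat n n" and CD: "C * D = 1\<^sub>m n" and DC: "D * C = 1\<^sub>m n"
    using quasi_perm_mat_inverse[OF C \<sigma> supp_all] by blast
  have "invertible_mat C"
    unfolding invertible_mat_def inverts_mat_def square_mat.simps
    using C D CD DC by (intro conjI exI[of _ D]) (simp_all add: carrier_matD)
  moreover have "\<exists>!j. j < n \<and> C $$ (i, j) \<noteq> 0" if "i < n" for i
    by (rule ex1I[of _ "\<sigma> i"]) (use supp[OF that] permutes_in_image[OF \<sigma>] that in auto)
  moreover have "\<exists>!i. i < n \<and> C $$ (i, j) \<noteq> 0" if "j < n" for j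
  proof (rule ex1I[of _ "inv_into UNIV \<sigma> j"])
    show "inv_into UNIV \<sigma> j < n \<and> C $$ (inv_into UNIV \<sigma> j, j) \<noteq> 0"
      using permutes_in_image[OF permutes_inv[OF \<sigma>]] permutes_inverses(1)[OF \<sigma>] supp that by simp
  next
    fix i assume "i < n \<and> C $$ (i, j) \<noteq> 0"
    then have "j = \<sigma> i" using supp that by blast
    then show "i = inv_into UNIV \<sigma> j" using permutes_inverses(2)[OF \<sigma>] by simp
  qed
  ultimately show ?thesis
    using C by (auto simp: QPL_def)
qed

lemma QPL_support_perm:
  assumes "C \<in> QPL n"
  shows "\<exists>\<sigma>. \<sigma> permutes {..<n} \<and> (\<forall>i<n. \<forall>j<n. C $$ (i, j) \<noteq> 0 \<longleftrightarrow> j = \<sigma> i)"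
proof (rule support_perm_exists[of n "\<lambda>i j. C $$ (i, j)"])
  fix i assume "i < n"
  then have "\<exists>!j. j < n \<and> C $$ (i, j) \<noteq> 0"
    using assms by (simp add: QPL_def)
  then show "\<exists>j<n. C $$ (i, j) \<noteq> 0"
    by (rule ex1_implies_ex)
next
  fix i k j assume that: "i < n" "k < n" "j < n" "C $$ (i, j) \<noteq> 0" "C $$ (k, j) \<noteq> 0"
  then have "\<exists>!i. i < n \<and> C $$ (i, j) \<noteq> 0"
    using assms by (simp add: QPL_def)
  then show "i = k"
    by (rule ex1E) (use that in blast)
qed

lemma QPL_inverse:
  assumes "C \<in> QPL n"
  shows "\<exists>D\<in>carrier_mat n n. C * D = 1\<^sub>m n \<and> D * C = 1\<^sub>m n"
proof -
  have C: "C \<in> carrier_mat n n" using assms by (simp add: QPL_def)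
  obtain \<sigma> where \<sigma>: "\<sigma> permutes {..<n}" and supp: "\<forall>i<n. \<forall>j<n. C $$ (i, j) \<noteq> 0 \<longleftrightarrow> j = \<sigma> i"
    using QPL_support_perm[OF assms] by blast
  note inverse = quasi_perm_mat_inverse[OF C \<sigma> supp]
  show ?thesis using inverse by blast
qed

lemma graded_alg_iso_coeff_row:
  fixes \<phi> :: "((nat \<Rightarrow> nat) \<Rightarrow> 'k::field) \<Rightarrow> (nat \<Rightarrow> nat) \<Rightarrow> 'k"
  assumes \<phi>: "graded_alg_iso n \<phi>" and i: "i < n"
  shows "\<exists>j<n. coeff_mat n \<phi> $$ (i, j) \<noteq> 0"
proof (rule ccontr)
  note iso = graded_alg_isoD[OF \<phi>]
  assume "\<not> ?thesis"
  then have zero: "coeff_mat n \<phi> $$ (i, j) = 0" if "j < n" for j using that by blast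
  have "\<phi> (xgen i) = lin_form n (\<lambda>j. 0)"
    unfolding graded_alg_iso_xgen[OF \<phi> i] lin_form_def
    by (intro ext sum.cong refl) (simp add: zero del: coeff_mat_index)
  also have "\<dots> = \<phi> ozero"
    using olinear_ozero[OF iso(1)] by (simp add: lin_form_def ozero_def)
  finally have "(xgen i :: (nat \<Rightarrow> nat) \<Rightarrow> 'k) = ozero"
    using inj_onD[OF iso(3)] xgen_in_OA[OF i] ozero_in_OA by blast
  then have "(xgen i :: (nat \<Rightarrow> nat) \<Rightarrow> 'k) (unit_exp i) = ozero (unit_exp i)" by simp
  then show False by (simp add: xgen_eq_omon omon_def ozero_def)
qed

text \<open>The images of two distinct generators anticommute, so by the anticommutator formula
  their coefficient vectors have disjoint supports.\<close>
lemma graded_alg_iso_coeff_col: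
  fixes \<phi> :: "((nat \<Rightarrow> nat) \<Rightarrow> 'k::field_char_0) \<Rightarrow> (nat \<Rightarrow> nat) \<Rightarrow> 'k"
  assumes \<phi>: "graded_alg_iso n \<phi>" and ik: "i < n" "k < n" and j: "j < n"
    and nz: "coeff_mat n \<phi> $$ (i, j) \<noteq> 0" "coeff_mat n \<phi> $$ (k, j) \<noteq> 0"
  shows "i = k"
proof (rule ccontr)
  note iso = graded_alg_isoD[OF \<phi>]
  let ?c = "\<lambda>i j. coeff_mat n \<phi> $$ (i, j)" and ?x = "\<lambda>i. xgen i :: (nat \<Rightarrow> nat) \<Rightarrow> 'k"
  assume "i \<noteq> k"
  have "ozero = \<phi> (oadd (omul n (?x i) (?x k)) (omul n (?x k) (?x i)))"
    by (simp add: xgen_anticommute[OF \<open>i \<noteq> k\<close> ik] olinear_ozero[OF iso(1)])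
  also have "\<dots> = oadd (omul n (\<phi> (?x i)) (\<phi> (?x k))) (omul n (\<phi> (?x k)) (\<phi> (?x i)))"
    using iso(1,4) ik unfolding olinear_def by (simp add: Ball_def xgen_in_OA omul_in_OA)
  also have "\<dots> = sq_form n (\<lambda>m. 2 * (?c i m * ?c k m))"
    by (simp add: graded_alg_iso_xgen[OF \<phi>] ik lin_form_anticommutator)
  finally have "sq_form n (\<lambda>m. 2 * (?c i m * ?c k m)) = ozero" by simp
  then have "sq_form n (\<lambda>m. 2 * (?c i m * ?c k m)) (sq_exp j) = 0"
    by (simp add: ozero_def)
  then show False using nz j by (simp add: sq_form_apply)
qed

lemma coeff_mat_in_QPL:
  fixes \<phi> :: "((nat \<Rightarrow> nat) \<Rightarrow> 'k::field_char_0) \<Rightarrow> (nat \<Rightarrow> nat) \<Rightarrow> 'k"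
  assumes \<phi>: "graded_alg_iso n \<phi>"
  shows "coeff_mat n \<phi> \<in> QPL n"
proof -
  have "\<exists>\<sigma>. \<sigma> permutes {..<n} \<and> (\<forall>i<n. \<forall>j<n. coeff_mat n \<phi> $$ (i, j) \<noteq> 0 \<longleftrightarrow> j = \<sigma> i)"
    by (rule support_perm_exists)
      (fact graded_alg_iso_coeff_row[OF \<phi>], fact graded_alg_iso_coeff_col[OF \<phi>])
  then show ?thesis
    using quasi_perm_in_QPL[OF coeff_mat_carrier] by blast
qed


section \<open>The isomorphism induced by a quasi-permutation matrix\<close>

definition perm_inversions :: "nat \<Rightarrow> (nat \<Rightarrow> nat) \<Rightarrow> (nat \<Rightarrow> nat) \<Rightarrow> (nat \<Rightarrow> nat) \<Rightarrow> nat" where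
  "perm_inversions n s a b = (\<Sum>p<n. \<Sum>q<n. if p < q \<and> s q < s p then a p * b q else 0)"

text \<open>The map x_i \<mapsto> c_i x_(s i) sends x^a to the product of the c_i^(a_i) times
  x_(s 0)^(a_0) ... x_(s (n-1))^(a_(n-1)); sorting these factors into x^(a \<circ> inv_into UNIV s)
  costs one sign for each pair of factors whose order s reverses.\<close>
definition qp_coeff :: "nat \<Rightarrow> (nat \<Rightarrow> 'k::field) \<Rightarrow> (nat \<Rightarrow> nat) \<Rightarrow> (nat \<Rightarrow> nat) \<Rightarrow> 'k" where
  "qp_coeff n c s a = (\<Prod>i<n. c i ^ a i) * (-1) ^ perm_inversions n s a a"

definition qp_map :: "nat \<Rightarrow> (nat \<Rightarrow> 'k::field) \<Rightarrow> (nat \<Rightarrow> nat)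
    \<Rightarrow> ((nat \<Rightarrow> nat) \<Rightarrow> 'k) \<Rightarrow> (nat \<Rightarrow> nat) \<Rightarrow> 'k" where
  "qp_map n c s = linext n (\<lambda>a. osmult (qp_coeff n c s a) (omon (a \<circ> inv_into UNIV s)))"

lemma comp_permutes_in_mons: "s permutes {..<n} \<Longrightarrow> a \<in> mons n \<Longrightarrow> a \<circ> s \<in> mons n"
  by (auto simp: mons_def permutes_not_in)

lemma mdeg_comp_permutes:
  assumes "s permutes {..<n}"
  shows "mdeg n (a \<circ> s) = mdeg n a"
  unfolding mdeg_def using sum.permute[OF assms, of a] by simp

lemma msgn_comp_inv:
  assumes s: "s permutes {..<n}"
  shows "msgn n (a \<circ> inv_into UNIV s) (b \<circ> inv_into UNIV s)
    = (-1) ^ (\<Sum>p<n. \<Sum>q<n. if s q < s p then a p * b q else 0)"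
proof -
  have P: "sum g {..<n} = (\<Sum>p<n. g (s p))" for g :: "nat \<Rightarrow> nat"
    using sum.permute[OF s] by (simp add: comp_def)
  have "(\<Sum>p<n. \<Sum>q<n. if q < p then (a \<circ> inv_into UNIV s) p * (b \<circ> inv_into UNIV s) q else 0)
      = (\<Sum>p<n. \<Sum>q<n. if q < s p then a p * b (inv_into UNIV s q) else 0)"
    by (rule trans[OF P[of "\<lambda>p. \<Sum>q<n. if q < p then (a \<circ> inv_into UNIV s) p * (b \<circ> inv_into UNIV s) q else 0"]])
      (intro sum.cong refl, simp add: permutes_inverses[OF s])
  also have "\<dots> = (\<Sum>p<n. \<Sum>q<n. if s q < s p then a p * b q else 0)"
  proof (rule sum.cong[OF refl])
    fix p
    show "(\<Sum>q<n. if q < s p then a p * b (inv_into UNIV s q) else 0)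
        = (\<Sum>q<n. if s q < s p then a p * b q else 0)"
      by (rule trans[OF P[of "\<lambda>q. if q < s p then a p * b (inv_into UNIV s q) else 0"]])
        (intro sum.cong refl, simp add: permutes_inverses[OF s])
  qed
  finally show ?thesis by (simp add: msgn_eq_sum_pairs)
qed

lemma perm_inversions_swap:
  "perm_inversions n s b a = (\<Sum>p<n. \<Sum>q<n. if q < p \<and> s p < s q then a p * b q else 0)"
  unfolding perm_inversions_def
  by (rule trans[OF sum.swap]) (intro sum.cong refl, simp add: mult.commute)

lemma sum_pairs_perm_inversions:
  assumes s: "s permutes {..<n}"
  shows "(\<Sum>p<n. \<Sum>q<n. if s q < s p then a p * b q else 0) + perm_inversions n s b a
       = (\<Sum>p<n. \<Sum>q<n. if q < p then a p * b q else 0) + perm_inversions n s a b"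
proof -
  have "(if s q < s p then a p * b q else 0) + (if q < p \<and> s p < s q then a p * b q else 0)
      = (if q < p then a p * b q else 0) + (if p < q \<and> s q < s p then a p * b q else 0)" for p q
  proof (cases "p = q")
    case False
    then have "s p \<noteq> s q" using permutes_inj[OF s] by (auto dest: injD)
    with False show ?thesis by (cases "p < q"; cases "s p < s q") auto
  qed simp
  then show ?thesis
    unfolding perm_inversions_swap[of n s b a] by (simp add: perm_inversions_def flip: sum.distrib)
qed

lemma perm_inversions_exp_add:
  "perm_inversions n s (exp_add a b) (exp_add a b)
    = perm_inversions n s a a + perm_inversions n s a b + perm_inversions n s b a + perm_inversions n s b b"
proof -
  have "(if P then (x + y) * (x' + y') else (0::nat))
      = (if P then x * x' else 0) + (if P then x * y' else 0) + (if P then y * x' else 0)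
        + (if P then y * y' else 0)" for P x y x' y'
    by (simp add: algebra_simps)
  then show ?thesis by (simp add: perm_inversions_def sum.distrib)
qed

lemma qp_coeff_exp_add:
  assumes s: "s permutes {..<n}"
  shows "qp_coeff n c s (exp_add a b) * msgn n a b
    = msgn n (a \<circ> inv_into UNIV s) (b \<circ> inv_into UNIV s) * qp_coeff n c s a * (qp_coeff n c s b :: 'k::field)"
proof -
  define E where "E = (\<Sum>p<n. \<Sum>q<n. if q < p then a p * b q else 0)"
  define Es where "Es = (\<Sum>p<n. \<Sum>q<n. if s q < s p then a p * b q else 0)"
  let ?I = "perm_inversions n s" and ?P = "\<lambda>a. \<Prod>i<n. c i ^ a i"
  have "?I (exp_add a b) (exp_add a b) + E = (Es + ?I a a + ?I b b) + 2 * ?I b a"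
    using sum_pairs_perm_inversions[OF s, of a b]
    by (simp add: E_def Es_def perm_inversions_exp_add)
  then have "(-1::'k) ^ (?I (exp_add a b) (exp_add a b) + E) = (-1) ^ (Es + ?I a a + ?I b b)"
    by (simp add: power_add power_mult)
  then have sign: "(-1::'k) ^ ?I (exp_add a b) (exp_add a b) * (-1) ^ E
      = (-1) ^ Es * ((-1) ^ ?I a a * (-1) ^ ?I b b)"
    by (simp add: power_add)
  have m1: "msgn n a b = (-1::'k) ^ E"
    unfolding E_def by (rule msgn_eq_sum_pairs)
  have m2: "msgn n (a \<circ> inv_into UNIV s) (b \<circ> inv_into UNIV s) = (-1::'k) ^ Es"
    unfolding Es_def by (rule msgn_comp_inv[OF s])
  have prod: "?P (exp_add a b) = ?P a * ?P b"
    by (simp add: power_add prod.distrib)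
  have "qp_coeff n c s (exp_add a b) * msgn n a b
      = (?P a * ?P b) * ((-1::'k) ^ ?I (exp_add a b) (exp_add a b) * (-1) ^ E)"
    unfolding qp_coeff_def m1 prod by (simp only: mult.assoc)
  also have "\<dots> = (?P a * ?P b) * ((-1) ^ Es * ((-1) ^ ?I a a * (-1) ^ ?I b b))"
    unfolding sign ..
  also have "\<dots> = msgn n (a \<circ> inv_into UNIV s) (b \<circ> inv_into UNIV s) * qp_coeff n c s a * qp_coeff n c s b"
    unfolding qp_coeff_def m2 by (simp only: mult_ac)
  finally show ?thesis .
qed

lemma qp_coeff_nonzero: "(\<And>i. i < n \<Longrightarrow> c i \<noteq> 0) \<Longrightarrow> qp_coeff n c s a \<noteq> 0"
  by (simp add: qp_coeff_def)

lemma qp_map_omon: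
  "a \<in> mons n \<Longrightarrow> qp_map n c s (omon a) = osmult (qp_coeff n c s a) (omon (a \<circ> inv_into UNIV s))"
  by (simp add: qp_map_def linext_omon)

lemma qp_map_xgen:
  assumes s: "s permutes {..<n}" and i: "i < n"
  shows "qp_map n c s (xgen i) = osmult (c i) (xgen (s i))"
proof -
  have "unit_exp i \<circ> inv_into UNIV s = unit_exp (s i)"
    by (rule ext) (auto simp: unit_exp_def permutes_inv_eq[OF s])
  moreover have "qp_coeff n c s (unit_exp i) = c i"
  proof -
    have "perm_inversions n s (unit_exp i) (unit_exp i) = 0"
      by (auto simp: perm_inversions_def unit_exp_def)
    moreover have "(\<Prod>j<n. c j ^ unit_exp i j) = (\<Prod>j<n. if j = i then c j else 1)"
      by (intro prod.cong refl) (simp add: unit_exp_def)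
    ultimately show ?thesis using i by (simp add: qp_coeff_def)
  qed
  ultimately show ?thesis
    by (simp add: xgen_eq_omon qp_map_omon unit_exp_in_mons i)
qed

lemma osmult_osmult [simp]: "osmult k (osmult k' f) = osmult (k * k') f"
  by (simp add: osmult_def mult.assoc)

lemma osmult_one [simp]: "osmult 1 f = f"
  by (simp add: osmult_def)

lemma comp_exp_add: "exp_add a b \<circ> t = exp_add (a \<circ> t) (b \<circ> t)"
  by (simp add: comp_def)

lemma comp_permutes_cancel:
  assumes "s permutes S"
  shows "a \<circ> inv_into UNIV s \<circ> s = a" "a \<circ> s \<circ> inv_into UNIV s = a"
  using permutes_inv_o[OF assms] by (simp_all add: comp_assoc)

lemma qp_map_in_OA: "s permutes {..<n} \<Longrightarrow> qp_map n c s f \<in> OA n"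
  unfolding qp_map_def
  by (auto intro!: linext_in_OA osmult_in_OA omon_in_OA comp_permutes_in_mons permutes_inv)

lemma olinear_qp_map: "olinear n (qp_map n c s)"
  by (simp add: qp_map_def olinear_linext)

lemma qp_map_omul:
  assumes s: "s permutes {..<n}" and fg: "f \<in> OA n" "g \<in> OA n"
  shows "qp_map n c s (omul n f g) = omul n (qp_map n c s f) (qp_map n c s g)"
proof (rule obilinear_eq_on_omon[where B = "\<lambda>f g. qp_map n c s (omul n f g)"
      and C = "\<lambda>f g. omul n (qp_map n c s f) (qp_map n c s g)", OF _ _ fg])
  show "obilinear n (\<lambda>f g. qp_map n c s (omul n f g))"
    by (rule obilinear_comp_left[OF obilinear_omul olinear_qp_map omul_in_OA])
  show "obilinear n (\<lambda>f g. omul n (qp_map n c s f) (qp_map n c s g))"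
    by (rule obilinear_comp_right[OF obilinear_omul olinear_qp_map olinear_qp_map])
      (simp_all add: qp_map_in_OA[OF s])
  fix a b assume "a \<in> supp f" "b \<in> supp g"
  then have a: "a \<in> mons n" and b: "b \<in> mons n" using fg by (auto simp: OA_def)
  have ab: "exp_add a b \<in> mons n" by (rule exp_add_in_mons[OF a b])
  have mons_inv: "x \<circ> inv_into UNIV s \<in> mons n" if "x \<in> mons n" for x
    using comp_permutes_in_mons[OF permutes_inv[OF s] that] .
  have key: "msgn n a b * qp_coeff n c s (exp_add a b)
      = qp_coeff n c s b * (qp_coeff n c s a * msgn n (a \<circ> inv_into UNIV s) (b \<circ> inv_into UNIV s))"
    using qp_coeff_exp_add[OF s, of c a b] by (simp add: ac_simps)
  have "qp_map n c s (omul n (omon a) (omon b)) = osmult (msgn n a b) (qp_map n c s (omon (exp_add a b)))"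
    using olinear_qp_map omon_in_OA[OF ab] unfolding omul_omon_omon olinear_def by blast
  also have "\<dots> = osmult (msgn n a b * qp_coeff n c s (exp_add a b))
      (omon (exp_add (a \<circ> inv_into UNIV s) (b \<circ> inv_into UNIV s)))"
    by (simp add: qp_map_omon[OF ab] comp_exp_add)
  also have "\<dots> = omul n (qp_map n c s (omon a)) (qp_map n c s (omon b))"
    unfolding key
    by (simp add: qp_map_omon a b omul_osmult omon_in_OA mons_inv osmult_in_OA omul_omon_omon)
  finally show "qp_map n c s (omul n (omon a) (omon b)) = omul n (qp_map n c s (omon a)) (qp_map n c s (omon b))" .
qed

lemma bij_betw_qp_map:
  fixes c :: "nat \<Rightarrow> 'k::field"
  assumes s: "s permutes {..<n}" and c: "\<And>i. i < n \<Longrightarrow> c i \<noteq> 0"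
  shows "bij_betw (qp_map n c s) (OA n) (OA n)"
proof -
  let ?\<phi> = "qp_map n c s"
  let ?\<psi> = "linext n (\<lambda>a. osmult (inverse (qp_coeff n c s (a \<circ> s))) (omon (a \<circ> s)))"
  note cancel = comp_permutes_cancel[OF s]
  have mons_inv: "a \<circ> inv_into UNIV s \<in> mons n" if "a \<in> mons n" for a
    using comp_permutes_in_mons[OF permutes_inv[OF s] that] .
  have w: "qp_coeff n c s a \<noteq> 0" for a
    by (rule qp_coeff_nonzero[OF c])
  have \<psi>_OA: "?\<psi> f \<in> OA n" for f
    by (auto intro!: linext_in_OA osmult_in_OA omon_in_OA comp_permutes_in_mons[OF s])
  have \<psi>_lin: "olinear n ?\<psi>"
    by (rule olinear_linext)
  have \<psi>\<phi>: "?\<psi> (?\<phi> f) = f" if "f \<in> OA n" for f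
  proof (rule olinear_eq_on_omon[OF _ olinear_id that])
    show "olinear n (\<lambda>f. ?\<psi> (?\<phi> f))"
      by (rule olinear_comp[of n ?\<psi> ?\<phi>]) (simp_all add: \<psi>_lin olinear_qp_map qp_map_in_OA[OF s])
    fix a assume "a \<in> supp f"
    then have a: "a \<in> mons n" using that by (auto simp: OA_def)
    have "?\<psi> (?\<phi> (omon a)) = osmult (qp_coeff n c s a) (?\<psi> (omon (a \<circ> inv_into UNIV s)))"
      using \<psi>_lin omon_in_OA[OF mons_inv[OF a]] unfolding qp_map_omon[OF a] olinear_def by blast
    also have "\<dots> = omon a"
      using w[of a] by (simp add: linext_omon mons_inv[OF a] cancel right_inverse)
    finally show "?\<psi> (?\<phi> (omon a)) = omon a" .
  qed
  have \<phi>\<psi>: "?\<phi> (?\<psi> f) = f" if "f \<in> OA n" for f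
  proof (rule olinear_eq_on_omon[OF _ olinear_id that])
    show "olinear n (\<lambda>f. ?\<phi> (?\<psi> f))"
      by (rule olinear_comp[of n ?\<phi> ?\<psi>]) (simp_all add: \<psi>_lin olinear_qp_map \<psi>_OA)
    fix a assume "a \<in> supp f"
    then have a: "a \<in> mons n" using that by (auto simp: OA_def)
    have as: "a \<circ> s \<in> mons n" by (rule comp_permutes_in_mons[OF s a])
    have "?\<phi> (?\<psi> (omon a)) = osmult (inverse (qp_coeff n c s (a \<circ> s))) (?\<phi> (omon (a \<circ> s)))"
      using olinear_qp_map omon_in_OA[OF as] unfolding linext_omon[OF a] olinear_def by blast
    also have "\<dots> = omon a"
      using w[of "a \<circ> s"] by (simp add: qp_map_omon[OF as] cancel left_inverse)
    finally show "?\<phi> (?\<psi> (omon a)) = omon a" .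
  qed
  show ?thesis
    by (rule bij_betw_byWitness[where f' = ?\<psi>]) (use \<psi>\<phi> \<phi>\<psi> qp_map_in_OA[OF s] \<psi>_OA in auto)
qed

lemma graded_alg_iso_qp_map:
  fixes c :: "nat \<Rightarrow> 'k::field"
  assumes s: "s permutes {..<n}" and c: "\<And>i. i < n \<Longrightarrow> c i \<noteq> 0"
  shows "graded_alg_iso n (qp_map n c s)"
proof -
  have "qp_coeff n c s (\<lambda>_. 0) = 1"
    by (simp add: qp_coeff_def perm_inversions_def cong: if_cong)
  then have "qp_map n c s oone = oone"
    by (simp add: oone_eq_omon qp_map_omon zero_in_mons comp_def)
  moreover have "ohomog n d (qp_map n c s f)" if "ohomog n d f" for d f
    unfolding qp_map_def using that
    by (rule ohomog_linext[rotated])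
      (auto simp: ohomog_def supp_def osmult_def omon_def mdeg_comp_permutes[OF permutes_inv[OF s]])
  ultimately show ?thesis
    using bij_betw_qp_map[where c = c, OF s c] olinear_qp_map[of n c s] qp_map_omul[OF s]
    unfolding graded_alg_iso_def olinear_def by blast
qed

lemma QPL_coeff_mat:
  fixes C :: "'k::field mat"
  assumes C: "C \<in> QPL n"
  shows "\<exists>\<phi>. graded_alg_iso n \<phi> \<and> coeff_mat n \<phi> = C"
proof -
  obtain \<sigma> where \<sigma>: "\<sigma> permutes {..<n}" and supp': "\<forall>i<n. \<forall>j<n. C $$ (i, j) \<noteq> 0 \<longleftrightarrow> j = \<sigma> i"
    using QPL_support_perm[OF C] by blast
  note supp = supp'[rule_format]
  define c where "c i = C $$ (i, \<sigma> i)" for i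
  have c: "c i \<noteq> 0" if "i < n" for i
    using supp[OF that] permutes_in_image[OF \<sigma>] that by (simp add: c_def)
  have Cc: "C \<in> carrier_mat n n" using C by (simp add: QPL_def)
  have "coeff_mat n (qp_map n c \<sigma>) = C"
  proof (rule eq_matI)
    fix i j assume "i < dim_row C" "j < dim_col C"
    then have i: "i < n" and j: "j < n" using Cc by (simp_all add: carrier_matD)
    have "coeff_mat n (qp_map n c \<sigma>) $$ (i, j) = c i * xgen (\<sigma> i) (unit_exp j)"
      using i j by (simp add: qp_map_xgen[OF \<sigma> i] osmult_def)
    also have "\<dots> = C $$ (i, j)"
      using supp[OF i j] by (auto simp: xgen_eq_omon omon_def unit_exp_eq_iff c_def)
    finally show "coeff_mat n (qp_map n c \<sigma>) $$ (i, j) = C $$ (i, j)" .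
  qed (use Cc in \<open>simp_all add: carrier_matD\<close>)
  then show ?thesis using graded_alg_iso_qp_map[where c = c, OF \<sigma> c] by blast
qed


section \<open>The classification\<close>

lemma dga_isomorphic_iff_QPL:
  fixes M M' :: "'k::field_char_0 mat"
  assumes M: "M \<in> carrier_mat n n" and M': "M' \<in> carrier_mat n n"
  shows "dga_isomorphic n M M' \<longleftrightarrow> (\<exists>C\<in>QPL n. M * map_mat (\<lambda>c. c ^ 2) C = C * M')"
proof
  assume "dga_isomorphic n M M'"
  then obtain \<phi> where \<phi>: "graded_alg_iso n \<phi>"
    and "\<forall>f\<in>OA n. \<phi> (dga_diff n M f) = dga_diff n M' (\<phi> f)"
    unfolding dga_isomorphic_def by blast
  then show "\<exists>C\<in>QPL n. M * map_mat (\<lambda>c. c ^ 2) C = C * M'"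
    using graded_alg_iso_commutes_dga_diff_iff[OF \<phi> M M'] coeff_mat_in_QPL[OF \<phi>] by blast
next
  assume "\<exists>C\<in>QPL n. M * map_mat (\<lambda>c. c ^ 2) C = C * M'"
  then obtain C where C: "C \<in> QPL n" and eq: "M * map_mat (\<lambda>c. c ^ 2) C = C * M'" by blast
  obtain \<phi> where \<phi>: "graded_alg_iso n \<phi>" and "coeff_mat n \<phi> = C"
    using QPL_coeff_mat[OF C] by blast
  then have "\<forall>f\<in>OA n. \<phi> (dga_diff n M f) = dga_diff n M' (\<phi> f)"
    using graded_alg_iso_commutes_dga_diff_iff[OF \<phi> M M'] eq by simp
  with \<phi> show "dga_isomorphic n M M'"
    unfolding dga_isomorphic_def by blast
qed

lemma mult_eq_iff_inverse:
  fixes A B C D P :: "'k::field mat"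
  assumes A: "A \<in> carrier_mat n n" and B: "B \<in> carrier_mat n n" and C: "C \<in> carrier_mat n n"
    and D: "D \<in> carrier_mat n n" and P: "P \<in> carrier_mat n n"
    and CD: "C * D = 1\<^sub>m n" and DC: "D * C = 1\<^sub>m n"
  shows "A * P = C * B \<longleftrightarrow> B = D * A * P"
proof
  assume AP: "A * P = C * B"
  have "B = (D * C) * B" using DC left_mult_one_mat[OF B] by simp
  also have "\<dots> = D * (C * B)" by (rule assoc_mult_mat[OF D C B])
  also have "\<dots> = D * A * P" using AP assoc_mult_mat[OF D A P] by simp
  finally show "B = D * A * P" .
next
  assume "B = D * A * P"
  then have "C * B = C * (D * (A * P))" using assoc_mult_mat[OF D A P] by simp
  also have "\<dots> = (C * D) * (A * P)" using assoc_mult_mat[OF C D mult_carrier_mat[OF A P]] by simp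
  also have "\<dots> = A * P" using CD left_mult_one_mat[OF mult_carrier_mat[OF A P]] by simp
  finally show "A * P = C * B" by simp
qed

lemma QPL_intertwining_iff:
  fixes C M M' :: "'k::field mat"
  assumes C: "C \<in> QPL n" and M: "M \<in> carrier_mat n n" and M': "M' \<in> carrier_mat n n"
  shows "M * map_mat (\<lambda>c. c ^ 2) C = C * M' \<longleftrightarrow>
    (\<exists>D \<in> carrier_mat n n. C * D = 1\<^sub>m n \<and> D * C = 1\<^sub>m n \<and> M' = D * M * map_mat (\<lambda>c. c ^ 2) C)"
proof -
  have Cc: "C \<in> carrier_mat n n" using C by (simp add: QPL_def)
  note iff = mult_eq_iff_inverse[OF M M' Cc _ map_carrier_mat[THEN iffD2, OF Cc]]
  obtain D where D: "D \<in> carrier_mat n n" "C * D = 1\<^sub>m n" "D * C = 1\<^sub>m n"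
    using QPL_inverse[OF C] by blast
  show ?thesis
  proof
    assume "M * map_mat (\<lambda>c. c ^ 2) C = C * M'"
    with D show "\<exists>D \<in> carrier_mat n n. C * D = 1\<^sub>m n \<and> D * C = 1\<^sub>m n \<and> M' = D * M * map_mat (\<lambda>c. c ^ 2) C"
      using iff[OF D] by blast
  next
    assume "\<exists>D \<in> carrier_mat n n. C * D = 1\<^sub>m n \<and> D * C = 1\<^sub>m n \<and> M' = D * M * map_mat (\<lambda>c. c ^ 2) C"
    then obtain D' where "D' \<in> carrier_mat n n" "C * D' = 1\<^sub>m n" "D' * C = 1\<^sub>m n"
      and "M' = D' * M * map_mat (\<lambda>c. c ^ 2) C" by blast
    then show "M * map_mat (\<lambda>c. c ^ 2) C = C * M'" using iff by blast
  qed
qed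

theorem theorem3p6:
  fixes n :: nat and M M' :: "'k::field_char_0 mat"
  assumes "alg_closed_type TYPE('k)"
    and "n \<ge> 2"
    and "M \<in> carrier_mat n n" and "M' \<in> carrier_mat n n"
  shows "dga_isomorphic n M M' \<longleftrightarrow>
    (\<exists>C \<in> QPL n. \<exists>D \<in> carrier_mat n n.
       C * D = 1\<^sub>m n \<and> D * C = 1\<^sub>m n \<and>
       M' = D * M * map_mat (\<lambda>c. c ^ 2) C)"
  unfolding dga_isomorphic_iff_QPL[OF assms(3,4)]
  using QPL_intertwining_iff[OF _ assms(3,4)] by (rule bex_cong[OF refl])

end
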